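(* Let $k$ be a field of characteristic zero and $n\geq 1$. There is an isomorphism of algebras $\mathcal{D}(\mathcal{B}_{n+1})\cong A_1\otimes\mathcal{D}(\tilde{\mathcal{B}}_n)$, where $A_1$ is the first Weyl algebra.
   Context: For a central hyperplane arrangement $\mathcal{A}$ in $k^m$ with coordinate ring $S=k[x_1,\ldots,x_m]$ and defining polynomial $Q$ (product of linear forms defining its hyperplanes), $\mathcal{D}(S)$ denotes the algebra of differential operators on $S$ (the subalgebra of $\operatorname{End}_k(S)$ generated by $\operatorname{Der}(S)$ and multiplications by elements of $S$), and the algebra of differential operators tangent to $\mathcal{A}$ is $\mathcal{D}(\mathcal{A})=\bigcap_{m\geq1}\{P\in\mathcal{D}(S): P\,Q^m\mathcal{D}(S)\subseteq Q^m\mathcal{D}(S)\}$; when $\mathcal{A}$ is free (i.e. $\operatorname{Der}\mathcal{A}=\{\theta\in\operatorname{Der}S:\lambda\mid\theta(\lambda)$ for every linear form $\lambda$ defining a hyperplane of $\mathcal{A}\}$ is a free $S$-module) this equals the subalgebra of $\operatorname{End}_k(S)$ generated by $\operatorname{Der}\mathcal{A}$ and multiplications by elements of $S$. The braid arrangement $\mathcal{B}_{n+1}$ in $k^{n+1}$ (coordinates $x_0,\ldots,x_n$) consists of the hyperplanes $x_i=x_j$, $0\leq i<j\leq n$. The arrangement $\tilde{\mathcal{B}}_n$ in $k^n$ (coordinates $x_1,\ldots,x_n$) is defined by the polynomial $x_1\cdots x_n\prod_{1\leq i<j\leq n}(x_i-x_j)$. *)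

theory Defs
  imports Main "HOL-Library.Poly_Mapping"
begin

text \<open>Polynomials in variables x_i (i :: nat) with coefficients in 'k:
  finitely supported maps from monomials (exponent vectors) to coefficients.\<close>
type_synonym 'k mpoly = "(nat \<Rightarrow>\<^sub>0 nat) \<Rightarrow>\<^sub>0 'k"

definition polys_in :: "nat set \<Rightarrow> 'k::comm_ring_1 mpoly set" where
  "polys_in I = {p :: 'k mpoly. \<forall>m \<in> Poly_Mapping.keys p. Poly_Mapping.keys m \<subseteq> I}"

definition mvar :: "nat \<Rightarrow> 'k::comm_ring_1 mpoly" where
  "mvar i = Poly_Mapping.single (Poly_Mapping.single i 1) 1"

definition mconst :: "'k::comm_ring_1 \<Rightarrow> 'k mpoly" where
  "mconst c = Poly_Mapping.single 0 c"

section \<open>Linear operators on a coordinate ring S (functions vanishing off S)\<close>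

type_synonym 'k op = "'k mpoly \<Rightarrow> 'k mpoly"

definition mult_op :: "'k::comm_ring_1 mpoly set \<Rightarrow> 'k mpoly \<Rightarrow> 'k op" where
  "mult_op S p = (\<lambda>q. if q \<in> S then p * q else 0)"

definition op_add :: "'k::comm_ring_1 op \<Rightarrow> 'k op \<Rightarrow> 'k op" where
  "op_add P R = (\<lambda>q. P q + R q)"

definition op_smult :: "'k::comm_ring_1 \<Rightarrow> 'k op \<Rightarrow> 'k op" where
  "op_smult c P = (\<lambda>q. mconst c * P q)"

definition derivations :: "'k::comm_ring_1 mpoly set \<Rightarrow> 'k op set" where
  "derivations S = {\<theta>.
      (\<forall>q\<in>S. \<theta> q \<in> S) \<and> (\<forall>q. q \<notin> S \<longrightarrow> \<theta> q = 0) \<and>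
      (\<forall>p\<in>S. \<forall>q\<in>S. \<theta> (p + q) = \<theta> p + \<theta> q) \<and>
      (\<forall>c. \<forall>q\<in>S. \<theta> (mconst c * q) = mconst c * \<theta> q) \<and>
      (\<forall>p\<in>S. \<forall>q\<in>S. \<theta> (p * q) = p * \<theta> q + q * \<theta> p)}"

inductive_set diff_ops :: "'k::comm_ring_1 mpoly set \<Rightarrow> 'k op set" for S where
  der: "\<theta> \<in> derivations S \<Longrightarrow> \<theta> \<in> diff_ops S"
| mult: "p \<in> S \<Longrightarrow> mult_op S p \<in> diff_ops S"
| add: "P \<in> diff_ops S \<Longrightarrow> R \<in> diff_ops S \<Longrightarrow> op_add P R \<in> diff_ops S"
| smult: "P \<in> diff_ops S \<Longrightarrow> op_smult c P \<in> diff_ops S"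
| comp: "P \<in> diff_ops S \<Longrightarrow> R \<in> diff_ops S \<Longrightarrow> P \<circ> R \<in> diff_ops S"

text \<open>D(A) for the arrangement with defining polynomial Q in S:
  all P in D(S) with P Q^m D(S) \<subseteq> Q^m D(S) for every m \<ge> 1.\<close>
definition tangent_ops :: "'k::comm_ring_1 mpoly set \<Rightarrow> 'k mpoly \<Rightarrow> 'k op set" where
  "tangent_ops S Q = {P \<in> diff_ops S. \<forall>m::nat. m \<ge> 1 \<longrightarrow>
      (\<forall>R \<in> diff_ops S. \<exists>R' \<in> diff_ops S.
          P \<circ> mult_op S (Q ^ m) \<circ> R = mult_op S (Q ^ m) \<circ> R')}"

text \<open>Braid arrangement B_{n+1} in k^{n+1}, coordinates x_0..x_n.\<close>
definition braid_poly :: "nat \<Rightarrow> 'k::comm_ring_1 mpoly" where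
  "braid_poly n = (\<Prod>(i,j) \<in> {(i,j). i < j \<and> j \<le> n}. mvar i - mvar j)"

definition D_braid :: "nat \<Rightarrow> 'k::comm_ring_1 op set" where
  "D_braid n = tangent_ops (polys_in {0..n}) (braid_poly n)"

text \<open>The arrangement B~_n in k^n, coordinates x_1..x_n.\<close>
definition braid_tilde_poly :: "nat \<Rightarrow> 'k::comm_ring_1 mpoly" where
  "braid_tilde_poly n = (\<Prod>i\<in>{1..n}. mvar i) *
      (\<Prod>(i,j) \<in> {(i,j). 1 \<le> i \<and> i < j \<and> j \<le> n}. mvar i - mvar j)"

definition D_braid_tilde :: "nat \<Rightarrow> 'k::comm_ring_1 op set" where
  "D_braid_tilde n = tangent_ops (polys_in {1..n}) (braid_tilde_poly n)"

text \<open>First Weyl algebra A_1 = D(k[t]) (here t = x_0), the algebra of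
  differential operators on the polynomial ring in one variable.\<close>
definition weyl_algebra_1 :: "'k::comm_ring_1 op set" where
  "weyl_algebra_1 = diff_ops (polys_in {0})"

text \<open>The tensor product A \<otimes>_k B of vector spaces is presented as the free
  k-vector space on A \<times> B (finitely supported functions), modulo the
  subspace generated by the bilinearity relations.\<close>
definition tfree :: "'k::comm_ring_1 op set \<Rightarrow> 'k op set \<Rightarrow> (('k op \<times> 'k op) \<Rightarrow>\<^sub>0 'k) set" where
  "tfree A B = {\<phi>. Poly_Mapping.keys \<phi> \<subseteq> A \<times> B}"

definition tgen :: "'k op \<Rightarrow> 'k op \<Rightarrow> (('k op \<times> 'k op) \<Rightarrow>\<^sub>0 'k::comm_ring_1)" where
  "tgen a b = Poly_Mapping.single (a, b) 1"

definition tsmult :: "'k::comm_ring_1 \<Rightarrow> (('k op \<times> 'k op) \<Rightarrow>\<^sub>0 'k) \<Rightarrow> (('k op \<times> 'k op) \<Rightarrow>\<^sub>0 'k)" where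
  "tsmult c \<phi> = Poly_Mapping.map (\<lambda>x. c * x) \<phi>"

inductive_set trel :: "'k::comm_ring_1 op set \<Rightarrow> 'k op set \<Rightarrow> (('k op \<times> 'k op) \<Rightarrow>\<^sub>0 'k) set"
  for A B where
  zero: "0 \<in> trel A B"
| addl: "a \<in> A \<Longrightarrow> a' \<in> A \<Longrightarrow> b \<in> B \<Longrightarrow>
     tgen (op_add a a') b - tgen a b - tgen a' b \<in> trel A B"
| addr: "a \<in> A \<Longrightarrow> b \<in> B \<Longrightarrow> b' \<in> B \<Longrightarrow>
     tgen a (op_add b b') - tgen a b - tgen a b' \<in> trel A B"
| smultl: "a \<in> A \<Longrightarrow> b \<in> B \<Longrightarrow> tgen (op_smult c a) b - tsmult c (tgen a b) \<in> trel A B"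
| smultr: "a \<in> A \<Longrightarrow> b \<in> B \<Longrightarrow> tgen a (op_smult c b) - tsmult c (tgen a b) \<in> trel A B"
| sum: "\<phi> \<in> trel A B \<Longrightarrow> \<psi> \<in> trel A B \<Longrightarrow> \<phi> + \<psi> \<in> trel A B"
| scal: "\<phi> \<in> trel A B \<Longrightarrow> tsmult c \<phi> \<in> trel A B"

text \<open>C is isomorphic, as a k-algebra, to A \<otimes>_k B, where A, B, C are
  algebras of operators with multiplication = composition and units 1_A, 1_B, 1_C:
  there is a k-linear map from the free space onto C whose kernel is exactly the
  relation subspace (i.e. a linear bijection A \<otimes> B \<rightarrow> C) that is multiplicative on
  pure tensors, (a \<otimes> b)(a' \<otimes> b') = aa' \<otimes> bb', and unital.\<close>
definition alg_iso_tensor ::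
  "'k::comm_ring_1 op set \<Rightarrow> 'k op \<Rightarrow> 'k op set \<Rightarrow> 'k op \<Rightarrow> 'k op set \<Rightarrow> 'k op \<Rightarrow> bool" where
  "alg_iso_tensor A oneA B oneB C oneC \<longleftrightarrow>
    (\<exists>\<Psi>. \<Psi> ` tfree A B = C \<and>
       (\<forall>\<phi>\<in>tfree A B. \<forall>\<psi>\<in>tfree A B. \<Psi> (\<phi> + \<psi>) = op_add (\<Psi> \<phi>) (\<Psi> \<psi>)) \<and>
       (\<forall>c. \<forall>\<phi>\<in>tfree A B. \<Psi> (tsmult c \<phi>) = op_smult c (\<Psi> \<phi>)) \<and>
       (\<forall>\<phi>\<in>tfree A B. \<Psi> \<phi> = (\<lambda>_. 0) \<longleftrightarrow> \<phi> \<in> trel A B) \<and>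
       (\<forall>a\<in>A. \<forall>a'\<in>A. \<forall>b\<in>B. \<forall>b'\<in>B.
          \<Psi> (tgen (a \<circ> a') (b \<circ> b')) = \<Psi> (tgen a b) \<circ> \<Psi> (tgen a' b')) \<and>
       \<Psi> (tgen oneA oneB) = oneC)"

end

theory Submission
  imports Defs
begin

text \<open>
  For disjoint sets of variables \<open>A\<close> and \<open>B\<close>, letting \<open>a \<otimes> b\<close> act on
  \<open>k[x\<^sub>A] \<otimes> k[x\<^sub>B] = k[x\<^bsub>A \<union> B\<^esub>]\<close> maps \<open>D(k[x\<^sub>A]) \<otimes> D(k[x\<^sub>B])\<close> onto
  \<open>D(k[x\<^bsub>A \<union> B\<^esub>])\<close>, since the image contains all multiplications and partial derivatives. The
  map is injective: once a tensor is written with linearly independent left factors \<open>a\<^sub>i\<close>, each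
  right factor \<open>b\<^sub>i\<close> is a finite linear combination of coefficient extractions of the operator
  \<open>\<Sum> a\<^sub>i \<otimes> b\<^sub>i\<close>, with weights dual to the matrix coefficients of the \<open>a\<^sub>i\<close>. Extraction
  preserves tangency to a polynomial \<open>Q\<close> in \<open>x\<^sub>B\<close>, so the operators on \<open>k[x\<^bsub>A \<union> B\<^esub>]\<close> tangent
  to \<open>Q\<close> correspond to \<open>D(k[x\<^sub>A]) \<otimes> D\<^sub>Q(k[x\<^sub>B])\<close>.

  Taking \<open>A = {0}\<close>, \<open>B = {1..n}\<close> and \<open>Q = braid_tilde_poly n\<close> identifies
  \<open>weyl_algebra_1 \<otimes> D_braid_tilde n\<close> with the operators on \<open>k[x\<^sub>0, \<dots>, x\<^sub>n]\<close> tangent to \<open>Q\<close>. The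
  involutive automorphism \<open>x\<^sub>0 \<mapsto> x\<^sub>0\<close>, \<open>x\<^sub>i \<mapsto> x\<^sub>0 - x\<^sub>i\<close> maps \<open>braid_poly n\<close> to \<open>\<plusminus>Q\<close>, so
  conjugation by it carries these operators onto \<open>D_braid n\<close>.
\<close>

section \<open>Polynomials and linear maps\<close>

abbreviation keys :: "('a \<Rightarrow>\<^sub>0 'b::zero) \<Rightarrow> 'a set" where "keys \<equiv> Poly_Mapping.keys"
abbreviation lookup :: "('a \<Rightarrow>\<^sub>0 'b::zero) \<Rightarrow> 'a \<Rightarrow> 'b" where "lookup \<equiv> poly_mapping.lookup"

abbreviation monom :: "(nat \<Rightarrow>\<^sub>0 nat) \<Rightarrow> 'k::comm_ring_1 mpoly" where
  "monom m \<equiv> Poly_Mapping.single m 1"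

lemma lookup_map_times: "lookup (Poly_Mapping.map ((*) c) w) x = (c :: 'k::comm_ring_1) * lookup w x"
  by (simp add: Poly_Mapping.map.rep_eq when_def)

lemma lookup_mconst_mult: "lookup (mconst c * p) m = c * lookup p m"
  by (simp add: mconst_def mult_map_scale_conv_mult[symmetric] lookup_map_times)

lemma mconst_0 [simp]: "mconst 0 = 0"
  unfolding mconst_def by simp

lemma mconst_1 [simp]: "mconst 1 = 1"
  unfolding mconst_def by simp

lemma mconst_add: "mconst (a + b) = mconst a + mconst b"
  unfolding mconst_def by (simp add: single_add)

lemma mconst_mult: "mconst (a * b) = mconst a * mconst b"
  unfolding mconst_def by (simp add: mult_single)

lemma mconst_uminus: "mconst (- a) = - mconst a"
  unfolding mconst_def by (simp add: single_uminus)

lemma mconst_power: "mconst (a ^ k) = mconst a ^ k"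
  by (induct k) (simp_all add: mconst_mult)

lemma mconst_sum: "mconst (\<Sum>i\<in>K. f i) = (\<Sum>i\<in>K. mconst (f i))"
  by (induct K rule: infinite_finite_induct) (simp_all add: mconst_add)

lemma mconst_mult_single: "mconst c * Poly_Mapping.single m d = Poly_Mapping.single m (c * d)"
  unfolding mconst_def by (simp add: mult_single)

lemma monom_mult: "monom m * monom m' = monom (m + m')"
  by (simp add: mult_single)

lemma mvar_eq_monom: "mvar i = monom (Poly_Mapping.single i 1)"
  unfolding mvar_def ..

lemma lookup_minus_nat: "lookup (a - b) k = lookup a k - lookup (b :: nat \<Rightarrow>\<^sub>0 nat) k"
  by transfer simp

lemma keys_add_nat: "keys (a + b) = keys a \<union> keys (b :: nat \<Rightarrow>\<^sub>0 nat)"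
  by transfer auto

lemma keys_minus_nat: "keys (m - (n :: nat \<Rightarrow>\<^sub>0 nat)) \<subseteq> keys m"
  by (auto simp: in_keys_iff lookup_minus_nat)

lemma polys_in_iff: "(p :: 'k::comm_ring_1 mpoly) \<in> polys_in I \<longleftrightarrow> (\<forall>m\<in>keys p. keys m \<subseteq> I)"
  unfolding polys_in_def by simp

lemma polys_in_0 [simp]: "0 \<in> polys_in I"
  by (simp add: polys_in_iff)

lemma polys_in_add [intro]: "p \<in> polys_in I \<Longrightarrow> q \<in> polys_in I \<Longrightarrow> p + q \<in> polys_in I"
  unfolding polys_in_iff using keys_add[of p q] by (meson Un_iff subsetD)

lemma polys_in_uminus [intro]: "p \<in> polys_in I \<Longrightarrow> - p \<in> polys_in I"
  unfolding polys_in_iff by simp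

lemma polys_in_diff [intro]: "p \<in> polys_in I \<Longrightarrow> q \<in> polys_in I \<Longrightarrow> p - q \<in> polys_in I"
  using polys_in_add[of p I "- q"] by auto

lemma polys_in_mult [intro]: "p \<in> polys_in I \<Longrightarrow> q \<in> polys_in I \<Longrightarrow> p * q \<in> polys_in I"
  unfolding polys_in_iff using keys_mult[of p q] by (fastforce simp: keys_add_nat)

lemma polys_in_single [intro]: "keys m \<subseteq> I \<Longrightarrow> Poly_Mapping.single m c \<in> polys_in I"
  unfolding polys_in_iff by simp

lemma polys_in_mconst [simp, intro]: "mconst c \<in> polys_in I"
  unfolding mconst_def by (rule polys_in_single) simp

lemma polys_in_1 [simp, intro]: "1 \<in> polys_in I"
  using polys_in_mconst[of 1 I] by simp

lemma polys_in_mvar [intro]: "i \<in> I \<Longrightarrow> mvar i \<in> polys_in I"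
  unfolding mvar_def by (rule polys_in_single) simp

lemma polys_in_mconst_mult [intro]: "p \<in> polys_in I \<Longrightarrow> mconst c * p \<in> polys_in I"
  by auto

lemma polys_in_sum [intro]: "(\<And>x. x \<in> K \<Longrightarrow> f x \<in> polys_in I) \<Longrightarrow> sum f K \<in> polys_in I"
  by (induct K rule: infinite_finite_induct) auto

lemma polys_in_prod [intro]: "(\<And>x. x \<in> K \<Longrightarrow> f x \<in> polys_in I) \<Longrightarrow> prod f K \<in> polys_in I"
  by (induct K rule: infinite_finite_induct) auto

lemma polys_in_power [intro]: "p \<in> polys_in I \<Longrightarrow> p ^ k \<in> polys_in I"
  by (induct k) auto

lemma polys_in_mono: "p \<in> polys_in I \<Longrightarrow> I \<subseteq> J \<Longrightarrow> p \<in> polys_in J"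
  unfolding polys_in_iff by blast

lemma mpoly_monomial_expansion: "p = (\<Sum>m\<in>keys p. mconst (lookup p m) * monom m)"
proof (rule poly_mapping_eqI)
  fix k
  have "lookup (\<Sum>m\<in>keys p. mconst (lookup p m) * monom m) k = (\<Sum>m\<in>keys p. (lookup p m when m = k))"
    by (simp add: lookup_sum mconst_mult_single lookup_single)
  also have "\<dots> = lookup p k"
    by (simp add: when_def in_keys_iff)
  finally show "lookup p k = lookup (\<Sum>m\<in>keys p. mconst (lookup p m) * monom m) k" by simp
qed

definition klinear_on :: "'k::comm_ring_1 mpoly set \<Rightarrow> ('k mpoly \<Rightarrow> 'k mpoly) \<Rightarrow> bool" where
  "klinear_on S F \<longleftrightarrow> (\<forall>p\<in>S. \<forall>q\<in>S. F (p + q) = F p + F q) \<and>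
                     (\<forall>c. \<forall>p\<in>S. F (mconst c * p) = mconst c * F p)"

lemma klinear_onD:
  "klinear_on S F \<Longrightarrow> p \<in> S \<Longrightarrow> q \<in> S \<Longrightarrow> F (p + q) = F p + F q"
  "klinear_on S F \<Longrightarrow> p \<in> S \<Longrightarrow> F (mconst c * p) = mconst c * F p"
  unfolding klinear_on_def by blast+

lemma klinear_on_zero: "klinear_on (polys_in I) F \<Longrightarrow> F 0 = 0"
  using klinear_onD(2)[of "polys_in I" F 0 0] by simp

lemma klinear_on_sum:
  assumes "klinear_on (polys_in I) F" "\<And>x. x \<in> K \<Longrightarrow> g x \<in> polys_in I" "finite K"
  shows "F (sum g K) = (\<Sum>x\<in>K. F (g x))"
  using assms(3,2)
proof (induct K rule: finite_induct)
  case empty then show ?case using klinear_on_zero[OF assms(1)] by simp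
next
  case (insert x K)
  then show ?case using klinear_onD(1)[OF assms(1), of "g x" "sum g K"] by auto
qed

lemma klinear_on_comp:
  "klinear_on S F \<Longrightarrow> klinear_on S' G \<Longrightarrow> (\<And>p. p \<in> S \<Longrightarrow> F p \<in> S') \<Longrightarrow> klinear_on S (G \<circ> F)"
  unfolding klinear_on_def by simp

lemma klinear_on_mult_left: "klinear_on S (\<lambda>p. r * p)"
  unfolding klinear_on_def by (simp add: distrib_left mult.left_commute)

lemma klinear_on_mult_right: "klinear_on S (\<lambda>p. p * r)"
  unfolding klinear_on_def by (simp add: distrib_right mult.assoc)

lemma klinear_on_mult_left_comp: "klinear_on S F \<Longrightarrow> klinear_on S (\<lambda>p. r * F p)"
  unfolding klinear_on_def by (simp add: distrib_left mult.left_commute)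

lemma klinear_on_mult_right_comp: "klinear_on S F \<Longrightarrow> klinear_on S (\<lambda>p. F p * r)"
  unfolding klinear_on_def by (simp add: distrib_right mult.assoc)

definition lin_ext :: "((nat \<Rightarrow>\<^sub>0 nat) \<Rightarrow> 'k::comm_ring_1 mpoly) \<Rightarrow> 'k mpoly \<Rightarrow> 'k mpoly" where
  "lin_ext f p = (\<Sum>m\<in>keys p. mconst (lookup p m) * f m)"

lemma lin_ext_mono_neutral:
  assumes "finite K" "keys p \<subseteq> K"
  shows "lin_ext f p = (\<Sum>m\<in>K. mconst (lookup p m) * f m)"
  unfolding lin_ext_def by (rule sum.mono_neutral_left) (use assms in \<open>auto simp: in_keys_iff\<close>)

lemma lin_ext_add: "lin_ext f (p + q) = lin_ext f p + lin_ext f q"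
proof -
  let ?K = "keys p \<union> keys q"
  have "lin_ext f (p + q) = (\<Sum>m\<in>?K. mconst (lookup (p + q) m) * f m)"
    by (rule lin_ext_mono_neutral) (auto dest: keys_add[THEN subsetD])
  also have "\<dots> = (\<Sum>m\<in>?K. mconst (lookup p m) * f m) + (\<Sum>m\<in>?K. mconst (lookup q m) * f m)"
    by (simp add: lookup_add mconst_add distrib_right sum.distrib)
  also have "\<dots> = lin_ext f p + lin_ext f q"
    using lin_ext_mono_neutral[of ?K p f] lin_ext_mono_neutral[of ?K q f] by simp
  finally show ?thesis .
qed

lemma lin_ext_smult: "lin_ext f (mconst c * p) = mconst c * lin_ext f p"
proof -
  have "keys (mconst c * p) \<subseteq> keys p"
    by (auto simp: in_keys_iff lookup_mconst_mult)
  then have "lin_ext f (mconst c * p) = (\<Sum>m\<in>keys p. mconst (lookup (mconst c * p) m) * f m)"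
    by (intro lin_ext_mono_neutral) auto
  also have "\<dots> = mconst c * lin_ext f p"
    by (simp add: lin_ext_def sum_distrib_left lookup_mconst_mult mconst_mult mult.assoc)
  finally show ?thesis .
qed

lemma lin_ext_0 [simp]: "lin_ext f 0 = 0"
  by (simp add: lin_ext_def)

lemma lin_ext_monom [simp]: "lin_ext f (monom m) = f m"
  by (simp add: lin_ext_def)

lemma lin_ext_sum: "lin_ext f (\<Sum>i\<in>K. g i) = (\<Sum>i\<in>K. lin_ext f (g i))"
  by (induct K rule: infinite_finite_induct) (simp_all add: lin_ext_add)

lemma lin_ext_fun_add: "lin_ext (\<lambda>m. f m + g m) p = lin_ext f p + lin_ext g p"
  unfolding lin_ext_def by (simp add: distrib_left sum.distrib)

lemma lin_ext_fun_smult: "lin_ext (\<lambda>m. mconst c * f m) p = mconst c * lin_ext f p"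
  unfolding lin_ext_def by (simp add: sum_distrib_left mult.left_commute)

lemma lin_ext_in_polys:
  assumes "\<And>m. m \<in> keys p \<Longrightarrow> f m \<in> polys_in I"
  shows "lin_ext f p \<in> polys_in I"
  unfolding lin_ext_def using assms by blast

lemma klinear_on_lin_ext: "klinear_on S (lin_ext f)"
  unfolding klinear_on_def by (simp add: lin_ext_add lin_ext_smult)

lemma klinear_on_eq_lin_ext:
  assumes "klinear_on (polys_in I) F" "p \<in> polys_in I"
  shows "F p = lin_ext (\<lambda>m. F (monom m)) p"
proof -
  have "F p = F (\<Sum>m\<in>keys p. mconst (lookup p m) * monom m)"
    using mpoly_monomial_expansion[of p] by simp
  also have "\<dots> = (\<Sum>m\<in>keys p. F (mconst (lookup p m) * monom m))"
    using assms by (intro klinear_on_sum) (auto simp: polys_in_iff mconst_mult_single)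
  also have "\<dots> = lin_ext (\<lambda>m. F (monom m)) p"
    unfolding lin_ext_def using assms
    by (intro sum.cong refl klinear_onD(2)) (auto simp: polys_in_iff)
  finally show ?thesis .
qed

lemma klinear_on_eqI:
  assumes "klinear_on (polys_in I) F" "klinear_on (polys_in I) G"
    and "\<And>m. keys m \<subseteq> I \<Longrightarrow> F (monom m) = G (monom m)" and "p \<in> polys_in I"
  shows "F p = G p"
proof -
  have "F p = lin_ext (\<lambda>m. F (monom m)) p" by (rule klinear_on_eq_lin_ext[OF assms(1,4)])
  also have "\<dots> = lin_ext (\<lambda>m. G (monom m)) p"
    unfolding lin_ext_def using assms(3,4) by (intro sum.cong refl) (auto simp: polys_in_iff)
  also have "\<dots> = G p" by (rule klinear_on_eq_lin_ext[OF assms(2,4), symmetric])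
  finally show ?thesis .
qed

lemma klinear_on_eqI2:
  assumes F: "\<And>q. q \<in> polys_in J \<Longrightarrow> klinear_on (polys_in I) (\<lambda>p. F p q)"
      "\<And>p. p \<in> polys_in I \<Longrightarrow> klinear_on (polys_in J) (F p)"
    and G: "\<And>q. q \<in> polys_in J \<Longrightarrow> klinear_on (polys_in I) (\<lambda>p. G p q)"
      "\<And>p. p \<in> polys_in I \<Longrightarrow> klinear_on (polys_in J) (G p)"
    and monom: "\<And>m m'. keys m \<subseteq> I \<Longrightarrow> keys m' \<subseteq> J \<Longrightarrow> F (monom m) (monom m') = G (monom m) (monom m')"
    and p: "p \<in> polys_in I" and q: "q \<in> polys_in J"
  shows "F p q = G p q"
proof -
  have "F (monom m) q = G (monom m) q" if "keys m \<subseteq> I" for m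
    using that by (intro klinear_on_eqI[OF F(2) G(2) monom q]) auto
  then show ?thesis
    by (rule klinear_on_eqI[OF F(1)[OF q] G(1)[OF q] _ p])
qed

definition mdegree :: "(nat \<Rightarrow>\<^sub>0 nat) \<Rightarrow> nat" where
  "mdegree m = sum (lookup m) (keys m)"

lemma single_add_minus_single:
  fixes m :: "nat \<Rightarrow>\<^sub>0 nat"
  assumes "lookup m i \<ge> 1"
  shows "Poly_Mapping.single i 1 + (m - Poly_Mapping.single i 1) = m"
  by (rule poly_mapping_eqI) (use assms in \<open>auto simp: lookup_add lookup_minus_nat lookup_single when_def\<close>)

lemma mdegree_minus_single:
  fixes m :: "nat \<Rightarrow>\<^sub>0 nat"
  assumes "lookup m i \<ge> 1"
  shows "mdegree (m - Poly_Mapping.single i 1) < mdegree m"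
proof -
  let ?e = "Poly_Mapping.single i (1::nat)"
  have i: "i \<in> keys m" using assms by (auto simp: in_keys_iff)
  have "mdegree (m - ?e) = sum (lookup (m - ?e)) (keys m)"
    unfolding mdegree_def by (rule sum.mono_neutral_left) (auto simp: in_keys_iff lookup_minus_nat)
  also have "\<dots> < sum (lookup m) (keys m)"
    using i assms by (intro sum_strict_mono_ex1) (auto simp: lookup_minus_nat lookup_single when_def)
  finally show ?thesis unfolding mdegree_def .
qed

lemma monomial_induct [consumes 1, case_names one mvar_mult]:
  assumes "keys m \<subseteq> I"
    and one: "P 1"
    and mvar_mult: "\<And>m i. keys m \<subseteq> I \<Longrightarrow> i \<in> I \<Longrightarrow> P (monom m) \<Longrightarrow> P (mvar i * monom m)"
  shows "P (monom m :: 'k::comm_ring_1 mpoly)"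
  using assms(1)
proof (induct "mdegree m" arbitrary: m rule: less_induct)
  case less
  show ?case
  proof (cases "m = 0")
    case True then show ?thesis using one by simp
  next
    case False
    then obtain i where i: "i \<in> keys m" by (metis keys_eq_empty ex_in_conv)
    then have li: "lookup m i \<ge> 1" by (simp add: in_keys_iff)
    let ?m = "m - Poly_Mapping.single i 1"
    have k: "keys ?m \<subseteq> I" using less.prems keys_minus_nat by blast
    have "P (mvar i * monom ?m)"
      using mvar_mult[OF k _ less.hyps[OF mdegree_minus_single[OF li] k]] i less.prems by blast
    also have "mvar i * monom ?m = monom m"
      unfolding mvar_eq_monom monom_mult using single_add_minus_single[OF li] by simp
    finally show ?thesis .
  qed
qed

section \<open>Linear operators and derivations\<close>

definition linop :: "'k::comm_ring_1 mpoly set \<Rightarrow> 'k op \<Rightarrow> bool" where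
  "linop S P \<longleftrightarrow> (\<forall>q\<in>S. P q \<in> S) \<and> (\<forall>q. q \<notin> S \<longrightarrow> P q = 0) \<and> klinear_on S P"

abbreviation id_op :: "nat set \<Rightarrow> 'k::comm_ring_1 op" where
  "id_op I \<equiv> mult_op (polys_in I) 1"

lemma linopD:
  "linop S P \<Longrightarrow> q \<in> S \<Longrightarrow> P q \<in> S"
  "linop S P \<Longrightarrow> q \<notin> S \<Longrightarrow> P q = 0"
  "linop S P \<Longrightarrow> klinear_on S P"
  unfolding linop_def by blast+

lemma linop_in_polys: "linop (polys_in I) P \<Longrightarrow> P q \<in> polys_in I"
  by (cases "q \<in> polys_in I") (simp_all add: linopD(1,2))

lemma linop_zero: "linop (polys_in I) P \<Longrightarrow> P 0 = 0"
  using linopD(3) klinear_on_zero by blast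

lemma linop_add: "linop S P \<Longrightarrow> p \<in> S \<Longrightarrow> q \<in> S \<Longrightarrow> P (p + q) = P p + P q"
  using linopD(3) klinear_onD(1) by blast

lemma linop_smult: "linop S P \<Longrightarrow> q \<in> S \<Longrightarrow> P (mconst c * q) = mconst c * P q"
  using linopD(3) klinear_onD(2) by blast

lemma linop_mult_op: "p \<in> polys_in I \<Longrightarrow> linop (polys_in I) (mult_op (polys_in I) p)"
  unfolding linop_def klinear_on_def mult_op_def by (auto simp: distrib_left mult.left_commute)

lemma linop_id_op: "linop (polys_in I) (id_op I)"
  by (rule linop_mult_op) simp

lemma linop_op_add: "linop (polys_in I) P \<Longrightarrow> linop (polys_in I) R \<Longrightarrow> linop (polys_in I) (op_add P R)"
  unfolding linop_def klinear_on_def op_add_def by (auto simp: distrib_left)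

lemma linop_op_smult: "linop (polys_in I) P \<Longrightarrow> linop (polys_in I) (op_smult c P)"
  unfolding linop_def klinear_on_def op_smult_def by (auto simp: distrib_left mult.left_commute)

lemma linop_comp:
  assumes "linop (polys_in I) P" "linop (polys_in I) R"
  shows "linop (polys_in I) (P \<circ> R)"
  unfolding linop_def using assms
  by (auto intro: klinear_on_comp linopD(3) simp: linopD(1,2) linop_zero)

lemma linop_zero_op: "linop (polys_in I) (\<lambda>_. 0)"
  unfolding linop_def klinear_on_def by auto

lemma comp_id_op_right: "linop (polys_in I) P \<Longrightarrow> P \<circ> id_op I = P"
  unfolding fun_eq_iff comp_def mult_op_def by (simp add: linop_zero linopD(2))

lemma comp_id_op_left: "linop (polys_in I) P \<Longrightarrow> id_op I \<circ> P = P"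
  unfolding fun_eq_iff comp_def mult_op_def by (simp add: linop_in_polys)

lemma mult_op_smult: "mult_op S (mconst c * p) = op_smult c (mult_op S p)"
  unfolding mult_op_def op_smult_def fun_eq_iff by (simp add: mult.assoc)

definition opsum :: "'i set \<Rightarrow> ('i \<Rightarrow> 'k::comm_ring_1 op) \<Rightarrow> 'k op" where
  "opsum K f = (\<lambda>q. \<Sum>i\<in>K. f i q)"

lemma opsum_empty [simp]: "opsum {} f = (\<lambda>_. 0)"
  by (simp add: opsum_def)

lemma opsum_insert: "finite K \<Longrightarrow> x \<notin> K \<Longrightarrow> opsum (insert x K) f = op_add (f x) (opsum K f)"
  by (simp add: opsum_def op_add_def)

lemma opsum_closed:
  assumes "(\<lambda>_. 0) \<in> C" "\<And>P R. P \<in> C \<Longrightarrow> R \<in> C \<Longrightarrow> op_add P R \<in> C"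
    and "\<And>i. i \<in> K \<Longrightarrow> f i \<in> C"
  shows "opsum K f \<in> C"
  using assms(3)
proof (induct K rule: infinite_finite_induct)
  case (infinite K) then show ?case using assms(1) by (simp add: opsum_def)
qed (simp_all add: assms(1,2) opsum_insert)

lemma opsum_cong: "(\<And>i. i \<in> K \<Longrightarrow> f i = g i) \<Longrightarrow> opsum K f = opsum K g"
  by (simp add: opsum_def)

lemma opsum_mono_neutral:
  assumes "finite K'" "K \<subseteq> K'" "\<And>i. i \<in> K' - K \<Longrightarrow> f i = (\<lambda>_. 0)"
  shows "opsum K f = opsum K' f"
  unfolding opsum_def fun_eq_iff using assms by (auto intro: sum.mono_neutral_left)

lemma opsum_comp_right: "opsum K f \<circ> G = opsum K (\<lambda>i. f i \<circ> G)"
  by (simp add: opsum_def fun_eq_iff)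

lemma opsum_comp_left:
  assumes "linop (polys_in I) L" "finite K" "\<And>i q. i \<in> K \<Longrightarrow> f i q \<in> polys_in I"
  shows "L \<circ> opsum K f = opsum K (\<lambda>i. L \<circ> f i)"
  unfolding opsum_def comp_def fun_eq_iff using assms
  by (auto intro: klinear_on_sum linopD(3))

lemma op_smult_comp_right: "op_smult c P \<circ> G = op_smult c (P \<circ> G)"
  by (simp add: op_smult_def fun_eq_iff)

lemma op_smult_comp_left:
  "linop (polys_in I) L \<Longrightarrow> (\<And>q. P q \<in> polys_in I) \<Longrightarrow> L \<circ> op_smult c P = op_smult c (L \<circ> P)"
  unfolding op_smult_def comp_def fun_eq_iff by (simp add: linop_smult)

lemma op_smult_zero [simp]: "op_smult 0 P = (\<lambda>_. 0)"
  by (simp add: op_smult_def)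

lemma op_smult_one [simp]: "op_smult 1 P = P"
  by (simp add: op_smult_def)

lemma mult_op_sum:
  "mult_op S (sum f K) = opsum K (\<lambda>i. mult_op S (f i))"
  unfolding mult_op_def opsum_def fun_eq_iff by (simp add: sum_distrib_right)

lemma linop_opsum: "(\<And>i. i \<in> K \<Longrightarrow> linop (polys_in I) (f i)) \<Longrightarrow> linop (polys_in I) (opsum K f)"
  by (rule opsum_closed[where C="Collect (linop (polys_in I))", simplified])
     (auto intro: linop_zero_op linop_op_add)

lemma derivations_iff:
  "\<theta> \<in> derivations S \<longleftrightarrow> linop S \<theta> \<and> (\<forall>p\<in>S. \<forall>q\<in>S. \<theta> (p * q) = p * \<theta> q + q * \<theta> p)"
  unfolding derivations_def linop_def klinear_on_def by blast

lemma derivationsD: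
  assumes "\<theta> \<in> derivations S"
  shows "linop S \<theta>" and "\<And>p q. p \<in> S \<Longrightarrow> q \<in> S \<Longrightarrow> \<theta> (p * q) = p * \<theta> q + q * \<theta> p"
  using assms unfolding derivations_iff by blast+

lemma derivation_one:
  assumes "\<theta> \<in> derivations (polys_in I)"
  shows "\<theta> 1 = 0"
  using derivationsD(2)[OF assms, of 1 1] by simp

lemma derivationI_monomials:
  fixes D :: "'k::comm_ring_1 op"
  assumes D: "linop (polys_in I) D"
    and monom: "\<And>m m'. keys m \<subseteq> I \<Longrightarrow> keys m' \<subseteq> I \<Longrightarrow>
        D (monom m * monom m') = monom m * D (monom m') + monom m' * D (monom m)"
  shows "D \<in> derivations (polys_in I)"
  unfolding derivations_iff
proof (intro conjI D ballI)
  fix p q :: "'k mpoly" assume pq: "p \<in> polys_in I" "q \<in> polys_in I"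
  show "D (p * q) = p * D q + q * D p"
  proof (rule klinear_on_eqI2[where F="\<lambda>p q. D (p * q)" and G="\<lambda>p q. p * D q + q * D p"])
    fix p q :: "'k mpoly"
    show "q \<in> polys_in I \<Longrightarrow> klinear_on (polys_in I) (\<lambda>p. D (p * q))"
      "p \<in> polys_in I \<Longrightarrow> klinear_on (polys_in I) (\<lambda>q. D (p * q))"
      by (auto intro!: klinear_on_comp[OF klinear_on_mult_right linopD(3)[OF D], unfolded comp_def]
          klinear_on_comp[OF klinear_on_mult_left linopD(3)[OF D], unfolded comp_def])
    show "klinear_on (polys_in I) (\<lambda>p. p * D q + q * D p)"
      "klinear_on (polys_in I) (\<lambda>q. p * D q + q * D p)"
      using linopD(3)[OF D] unfolding klinear_on_def by (simp_all add: algebra_simps)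
  qed (use monom pq in auto)
qed

lemma derivation_eqI:
  assumes "\<theta>1 \<in> derivations (polys_in I)" "\<theta>2 \<in> derivations (polys_in I)"
    and "\<And>i. i \<in> I \<Longrightarrow> \<theta>1 (mvar i) = \<theta>2 (mvar i)"
  shows "\<theta>1 = \<theta>2"
proof
  fix p
  have lin: "linop (polys_in I) \<theta>1" "linop (polys_in I) \<theta>2"
    using assms(1,2) by (auto dest: derivationsD(1))
  show "\<theta>1 p = \<theta>2 p"
  proof (cases "p \<in> polys_in I")
    case False then show ?thesis using lin by (simp add: linopD(2))
  next
    case True
    show ?thesis
    proof (rule klinear_on_eqI[OF linopD(3)[OF lin(1)] linopD(3)[OF lin(2)] _ True])
      fix m :: "nat \<Rightarrow>\<^sub>0 nat" assume "keys m \<subseteq> I"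
      then show "\<theta>1 (monom m) = \<theta>2 (monom m)"
      proof (induct rule: monomial_induct)
        case one show ?case using assms(1,2) by (simp add: derivation_one)
      next
        case (mvar_mult m i)
        then show ?case
          using derivationsD(2)[OF assms(1)] derivationsD(2)[OF assms(2)] assms(3)
          by (simp add: polys_in_single polys_in_mvar)
      qed
    qed
  qed
qed

lemma derivations_sum:
  assumes "\<And>i. i \<in> K \<Longrightarrow> D i \<in> derivations (polys_in I)"
  shows "opsum K D \<in> derivations (polys_in I)"
proof -
  have "linop (polys_in I) (opsum K D)" using assms by (intro linop_opsum derivationsD(1))
  moreover have "(\<Sum>i\<in>K. D i (p * q)) = p * (\<Sum>i\<in>K. D i q) + q * (\<Sum>i\<in>K. D i p)"
    if "p \<in> polys_in I" "q \<in> polys_in I" for p q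
  proof -
    have "(\<Sum>i\<in>K. D i (p * q)) = (\<Sum>i\<in>K. p * D i q + q * D i p)"
      using assms derivationsD(2)[OF _ that] by (intro sum.cong) auto
    then show ?thesis by (simp add: sum.distrib sum_distrib_left)
  qed
  ultimately show ?thesis unfolding derivations_iff by (simp add: opsum_def)
qed

lemma derivation_mult_left:
  assumes "\<theta> \<in> derivations (polys_in I)" "r \<in> polys_in I"
  shows "mult_op (polys_in I) r \<circ> \<theta> \<in> derivations (polys_in I)"
proof -
  have lin: "linop (polys_in I) \<theta>" by (rule derivationsD(1)[OF assms(1)])
  have "r * \<theta> (p * q) = p * (r * \<theta> q) + q * (r * \<theta> p)"
    if "p \<in> polys_in I" "q \<in> polys_in I" for p q
    using derivationsD(2)[OF assms(1) that] by (simp add: algebra_simps)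
  moreover have "linop (polys_in I) (mult_op (polys_in I) r \<circ> \<theta>)"
    using lin assms(2) by (simp add: linop_comp linop_mult_op)
  ultimately show ?thesis
    using linop_in_polys[OF lin] unfolding derivations_iff by (simp add: mult_op_def)
qed

lemma derivation_expansion:
  assumes "finite I" "\<theta> \<in> derivations (polys_in I)"
    and D: "\<And>i. i \<in> I \<Longrightarrow> D i \<in> derivations (polys_in I)"
    and Dv: "\<And>i j. i \<in> I \<Longrightarrow> j \<in> I \<Longrightarrow> D i (mvar j) = (if i = j then 1 else 0)"
  shows "\<theta> = opsum I (\<lambda>i. mult_op (polys_in I) (\<theta> (mvar i)) \<circ> D i)"
proof -
  have "opsum I (\<lambda>i. mult_op (polys_in I) (\<theta> (mvar i)) \<circ> D i) \<in> derivations (polys_in I)"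
    using assms by (intro derivations_sum derivation_mult_left linopD(1)[OF derivationsD(1)[OF assms(2)]]) auto
  moreover have "opsum I (\<lambda>i. mult_op (polys_in I) (\<theta> (mvar i)) \<circ> D i) (mvar j) = \<theta> (mvar j)"
    if "j \<in> I" for j
  proof -
    have "opsum I (\<lambda>i. mult_op (polys_in I) (\<theta> (mvar i)) \<circ> D i) (mvar j) =
        (\<Sum>i\<in>I. if i = j then \<theta> (mvar i) else 0)"
      unfolding opsum_def using that by (intro sum.cong) (auto simp: Dv mult_op_def)
    then show ?thesis using that assms(1) by simp
  qed
  ultimately show ?thesis using assms(2) by (intro derivation_eqI) auto
qed

definition partial_deriv :: "nat set \<Rightarrow> nat \<Rightarrow> 'k::comm_ring_1 op" where
  "partial_deriv I i = (\<lambda>q. if q \<in> polys_in I then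
     lin_ext (\<lambda>m. mconst (of_nat (lookup m i)) * monom (m - Poly_Mapping.single i 1)) q else 0)"

lemma partial_deriv_monom:
  "keys m \<subseteq> I \<Longrightarrow>
    partial_deriv I i (monom m) = Poly_Mapping.single (m - Poly_Mapping.single i 1) (of_nat (lookup m i))"
  unfolding partial_deriv_def by (auto simp: mconst_mult_single)

lemma partial_deriv_mvar: "j \<in> I \<Longrightarrow> partial_deriv I i (mvar j) = (if i = j then 1 else 0)"
  unfolding mvar_eq_monom by (subst partial_deriv_monom) (auto simp: lookup_single when_def)

lemma linop_partial_deriv: "linop (polys_in I) (partial_deriv I i)"
  unfolding linop_def
proof (intro conjI allI impI ballI)
  fix q assume q: "q \<in> polys_in I"
  show "partial_deriv I i q \<in> polys_in I"
    unfolding partial_deriv_def using q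
    by (simp, intro lin_ext_in_polys polys_in_mconst_mult polys_in_single)
       (auto simp: polys_in_iff dest: keys_minus_nat[THEN subsetD])
next
  show "klinear_on (polys_in I) (partial_deriv I i)"
    unfolding klinear_on_def partial_deriv_def by (auto simp: lin_ext_add lin_ext_smult)
qed (simp add: partial_deriv_def)

lemma partial_deriv_derivation: "partial_deriv I i \<in> derivations (polys_in I)"
proof (rule derivationI_monomials[OF linop_partial_deriv])
  fix m m' :: "nat \<Rightarrow>\<^sub>0 nat" assume m: "keys m \<subseteq> I" and m': "keys m' \<subseteq> I"
  let ?e = "Poly_Mapping.single i (1::nat)"
  have shift: "monom n * partial_deriv I i (monom n') =
      Poly_Mapping.single (n + n' - ?e) (of_nat (lookup n' i))" if "keys n' \<subseteq> I" for n n'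
  proof (cases "lookup n' i = 0")
    case False
    then have "n + (n' - ?e) = n + n' - ?e"
      by (intro poly_mapping_eqI) (auto simp: lookup_add lookup_minus_nat lookup_single when_def)
    then show ?thesis unfolding partial_deriv_monom[OF that] mult_single by simp
  qed (simp add: partial_deriv_monom[OF that])
  have "partial_deriv I i (monom m * monom m') =
      Poly_Mapping.single (m + m' - ?e) (of_nat (lookup m i + lookup m' i))"
    using m m' by (simp add: monom_mult partial_deriv_monom keys_add_nat lookup_add)
  also have "\<dots> = monom m * partial_deriv I i (monom m') + monom m' * partial_deriv I i (monom m)"
    unfolding shift[OF m] shift[OF m'] add.commute[of m' m] by (simp add: single_add[symmetric] add.commute)
  finally show "partial_deriv I i (monom m * monom m') =
      monom m * partial_deriv I i (monom m') + monom m' * partial_deriv I i (monom m)" .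
qed

lemma linop_diff_ops: "P \<in> diff_ops (polys_in I) \<Longrightarrow> linop (polys_in I) P"
  by (induct rule: diff_ops.induct)
     (blast intro: linop_op_add linop_op_smult linop_comp linop_mult_op derivationsD(1))+

lemma diff_ops_zero: "(\<lambda>_. 0) \<in> diff_ops (polys_in I)"
proof -
  have "op_smult 0 (id_op I) \<in> diff_ops (polys_in I)" by (intro diff_ops.smult diff_ops.mult polys_in_1)
  then show ?thesis by simp
qed

lemma diff_ops_opsum: "(\<And>i. i \<in> K \<Longrightarrow> f i \<in> diff_ops (polys_in I)) \<Longrightarrow> opsum K f \<in> diff_ops (polys_in I)"
  by (rule opsum_closed[OF diff_ops_zero diff_ops.add])

section \<open>Tensor products of operators\<close>

definition mrestrict :: "nat set \<Rightarrow> (nat \<Rightarrow>\<^sub>0 nat) \<Rightarrow> (nat \<Rightarrow>\<^sub>0 nat)" where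
  "mrestrict A m = Poly_Mapping.mapp (\<lambda>i k. if i \<in> A then k else 0) m"

lemma lookup_mrestrict: "lookup (mrestrict A m) i = (if i \<in> A then lookup m i else 0)"
  unfolding mrestrict_def lookup_mapp by (simp add: when_def in_keys_iff)

lemma keys_mrestrict: "keys (mrestrict A m) = keys m \<inter> A"
  by (auto simp: in_keys_iff lookup_mrestrict split: if_splits)

lemma mrestrict_add: "mrestrict A (m + m') = mrestrict A m + mrestrict A m'"
  by (rule poly_mapping_eqI) (simp add: lookup_mrestrict lookup_add)

lemma mrestrict_id: "keys m \<subseteq> A \<Longrightarrow> mrestrict A m = m"
  by (rule poly_mapping_eqI) (auto simp: lookup_mrestrict in_keys_iff)

lemma mrestrict_eq_0: "keys m \<inter> A = {} \<Longrightarrow> mrestrict A m = 0"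
  by (rule poly_mapping_eqI) (auto simp: lookup_mrestrict in_keys_iff)

lemma mrestrict_Un: "A \<inter> B = {} \<Longrightarrow> keys m \<subseteq> A \<union> B \<Longrightarrow> mrestrict A m + mrestrict B m = m"
  by (rule poly_mapping_eqI) (auto simp: lookup_mrestrict lookup_add in_keys_iff)

lemma polys_in_Un1: "p \<in> polys_in A \<Longrightarrow> p \<in> polys_in (A \<union> B)"
  and polys_in_Un2: "p \<in> polys_in B \<Longrightarrow> p \<in> polys_in (A \<union> B)"
  by (auto elim: polys_in_mono)

lemma polys_in_mult_Un: "u \<in> polys_in A \<Longrightarrow> g \<in> polys_in B \<Longrightarrow> u * g \<in> polys_in (A \<union> B)"
  by (intro polys_in_mult polys_in_Un1 polys_in_Un2)

text \<open>\<open>tensor_op A B a b\<close> is the operator \<open>a \<otimes> b\<close> on \<open>k[x\<^sub>A] \<otimes> k[x\<^sub>B] = k[x\<^bsub>A \<union> B\<^esub>]\<close>.\<close>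
definition tensor_op :: "nat set \<Rightarrow> nat set \<Rightarrow> 'k::comm_ring_1 op \<Rightarrow> 'k op \<Rightarrow> 'k op" where
  "tensor_op A B a b = (\<lambda>q. if q \<in> polys_in (A \<union> B) then
      lin_ext (\<lambda>m. a (monom (mrestrict A m)) * b (monom (mrestrict B m))) q else 0)"

lemma tensor_op_swap: "tensor_op A B a b = tensor_op B A b a"
proof -
  have "(\<lambda>m. a (monom (mrestrict A m)) * b (monom (mrestrict B m))) =
      (\<lambda>m. b (monom (mrestrict B m)) * a (monom (mrestrict A m)))"
    by (simp add: fun_eq_iff mult.commute)
  then show ?thesis unfolding tensor_op_def by (simp only: Un_commute)
qed

lemma tensor_op_monom:
  "keys m \<subseteq> A \<union> B \<Longrightarrow> tensor_op A B a b (monom m) = a (monom (mrestrict A m)) * b (monom (mrestrict B m))"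
  unfolding tensor_op_def by auto

lemma tensor_op_add_left: "tensor_op A B (op_add a a') b = op_add (tensor_op A B a b) (tensor_op A B a' b)"
  unfolding tensor_op_def op_add_def by (auto simp: fun_eq_iff distrib_right lin_ext_fun_add)

lemma tensor_op_add_right: "tensor_op A B a (op_add b b') = op_add (tensor_op A B a b) (tensor_op A B a b')"
  unfolding tensor_op_def op_add_def by (auto simp: fun_eq_iff distrib_left lin_ext_fun_add)

lemma tensor_op_smult_left: "tensor_op A B (op_smult c a) b = op_smult c (tensor_op A B a b)"
  unfolding tensor_op_def op_smult_def by (auto simp: fun_eq_iff mult.assoc lin_ext_fun_smult)

lemma tensor_op_smult_right: "tensor_op A B a (op_smult c b) = op_smult c (tensor_op A B a b)"
  unfolding tensor_op_def op_smult_def by (auto simp: fun_eq_iff mult.left_commute lin_ext_fun_smult)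

lemma linop_tensor_op:
  fixes a b :: "'k::comm_ring_1 op"
  assumes "linop (polys_in A) a" "linop (polys_in B) b"
  shows "linop (polys_in (A \<union> B)) (tensor_op A B a b)"
  unfolding linop_def
proof (intro conjI allI impI ballI)
  fix q :: "'k mpoly" assume "q \<in> polys_in (A \<union> B)"
  then show "tensor_op A B a b q \<in> polys_in (A \<union> B)"
    unfolding tensor_op_def using assms
    by (auto intro!: lin_ext_in_polys polys_in_mult_Un linop_in_polys[OF assms(1)]
        linop_in_polys[OF assms(2)])
next
  show "klinear_on (polys_in (A \<union> B)) (tensor_op A B a b)"
    unfolding klinear_on_def tensor_op_def by (auto simp: lin_ext_add lin_ext_smult)
qed (simp add: tensor_op_def)

context
  fixes A B :: "nat set"
  assumes disjoint: "A \<inter> B = {}"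
begin

lemma monom_split:
  "keys m \<subseteq> A \<union> B \<Longrightarrow> (monom m :: 'k::comm_ring_1 mpoly) = monom (mrestrict A m) * monom (mrestrict B m)"
  by (simp add: monom_mult mrestrict_Un[OF disjoint])

lemma tensor_op_mult:
  assumes a: "linop (polys_in A) a" and b: "linop (polys_in B) b"
    and "u \<in> polys_in A" "g \<in> polys_in B"
  shows "tensor_op A B a b (u * g) = a u * b g"
proof (rule klinear_on_eqI2[where F="\<lambda>u g. tensor_op A B a b (u * g)" and G="\<lambda>u g. a u * b g"])
  have T: "klinear_on (polys_in (A \<union> B)) (tensor_op A B a b)"
    by (rule linopD(3)[OF linop_tensor_op[OF a b]])
  fix u g
  show "g \<in> polys_in B \<Longrightarrow> klinear_on (polys_in A) (\<lambda>u. tensor_op A B a b (u * g))"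
    by (rule klinear_on_comp[OF klinear_on_mult_right T, unfolded comp_def]) (rule polys_in_mult_Un)
  show "u \<in> polys_in A \<Longrightarrow> klinear_on (polys_in B) (\<lambda>g. tensor_op A B a b (u * g))"
    by (rule klinear_on_comp[OF klinear_on_mult_left T, unfolded comp_def]) (rule polys_in_mult_Un)
  show "klinear_on (polys_in A) (\<lambda>u. a u * b g)"
    by (rule klinear_on_mult_right_comp[OF linopD(3)[OF a]])
  show "klinear_on (polys_in B) (\<lambda>g. a u * b g)"
    by (rule klinear_on_mult_left_comp[OF linopD(3)[OF b]])
next
  fix m m' :: "nat \<Rightarrow>\<^sub>0 nat" assume m: "keys m \<subseteq> A" and m': "keys m' \<subseteq> B"
  have "keys m' \<inter> A = {}" "keys m \<inter> B = {}" using m m' disjoint by auto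
  then have "mrestrict A (m + m') = m" "mrestrict B (m + m') = m'"
    using m m' by (simp_all add: mrestrict_add mrestrict_id mrestrict_eq_0)
  moreover have "keys (m + m') \<subseteq> A \<union> B" using m m' by (auto simp: keys_add_nat)
  ultimately show "tensor_op A B a b (monom m * monom m') = a (monom m) * b (monom m')"
    by (simp add: monom_mult tensor_op_monom)
qed fact+

lemma tensor_op_comp:
  assumes "linop (polys_in A) a" "linop (polys_in A) a'" "linop (polys_in B) b" "linop (polys_in B) b'"
  shows "tensor_op A B a b \<circ> tensor_op A B a' b' = tensor_op A B (a \<circ> a') (b \<circ> b')"
proof
  fix q
  have T': "linop (polys_in (A \<union> B)) (tensor_op A B a' b')"
    using assms(2,4) by (rule linop_tensor_op)
  show "(tensor_op A B a b \<circ> tensor_op A B a' b') q = tensor_op A B (a \<circ> a') (b \<circ> b') q"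
  proof (cases "q \<in> polys_in (A \<union> B)")
    case True
    show ?thesis
    proof (rule klinear_on_eqI[OF _ _ _ True])
      show "klinear_on (polys_in (A \<union> B)) (tensor_op A B a b \<circ> tensor_op A B a' b')"
        by (rule klinear_on_comp[OF linopD(3)[OF T'] linopD(3)[OF linop_tensor_op[OF assms(1,3)]]
              linopD(1)[OF T']])
      show "klinear_on (polys_in (A \<union> B)) (tensor_op A B (a \<circ> a') (b \<circ> b'))"
        using assms by (intro linopD(3) linop_tensor_op linop_comp)
      fix m :: "nat \<Rightarrow>\<^sub>0 nat" assume "keys m \<subseteq> A \<union> B"
      then show "(tensor_op A B a b \<circ> tensor_op A B a' b') (monom m) =
          tensor_op A B (a \<circ> a') (b \<circ> b') (monom m)"
        using assms by (simp add: tensor_op_monom tensor_op_mult linop_in_polys)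
    qed
  qed (simp add: tensor_op_def)
qed

lemma tensor_op_mult_op:
  assumes "u \<in> polys_in A" "g \<in> polys_in B"
  shows "tensor_op A B (mult_op (polys_in A) u) (mult_op (polys_in B) g) = mult_op (polys_in (A \<union> B)) (u * g)"
proof
  fix q
  show "tensor_op A B (mult_op (polys_in A) u) (mult_op (polys_in B) g) q =
      mult_op (polys_in (A \<union> B)) (u * g) q"
  proof (cases "q \<in> polys_in (A \<union> B)")
    case True
    show ?thesis
    proof (rule klinear_on_eqI[OF _ _ _ True])
      show "klinear_on (polys_in (A \<union> B)) (tensor_op A B (mult_op (polys_in A) u) (mult_op (polys_in B) g))"
        using assms by (intro linopD(3) linop_tensor_op linop_mult_op)
      show "klinear_on (polys_in (A \<union> B)) (mult_op (polys_in (A \<union> B)) (u * g))"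
        using assms by (intro linopD(3) linop_mult_op polys_in_mult_Un)
      fix m :: "nat \<Rightarrow>\<^sub>0 nat" assume m: "keys m \<subseteq> A \<union> B"
      have "keys (mrestrict A m) \<subseteq> A" "keys (mrestrict B m) \<subseteq> B" by (auto simp: keys_mrestrict)
      then have "tensor_op A B (mult_op (polys_in A) u) (mult_op (polys_in B) g) (monom m) =
          (u * monom (mrestrict A m)) * (g * monom (mrestrict B m))"
        using m by (simp add: tensor_op_monom mult_op_def polys_in_single)
      also have "\<dots> = (u * g) * monom m"
        by (simp add: monom_split[OF m] ac_simps)
      also have "\<dots> = mult_op (polys_in (A \<union> B)) (u * g) (monom m)"
        using m by (simp add: mult_op_def polys_in_single)
      finally show "tensor_op A B (mult_op (polys_in A) u) (mult_op (polys_in B) g) (monom m) =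
          mult_op (polys_in (A \<union> B)) (u * g) (monom m)" .
    qed
  qed (simp add: tensor_op_def mult_op_def)
qed

lemma tensor_op_derivation_left:
  assumes \<theta>: "\<theta> \<in> derivations (polys_in A)"
  shows "tensor_op A B \<theta> (id_op B) \<in> derivations (polys_in (A \<union> B))"
proof (rule derivationI_monomials)
  let ?D = "tensor_op A B \<theta> (id_op B)"
  have lin: "linop (polys_in A) \<theta>" by (rule derivationsD(1)[OF \<theta>])
  show "linop (polys_in (A \<union> B)) ?D" by (rule linop_tensor_op[OF lin linop_id_op])
  have D: "?D (u * g) = \<theta> u * g" if "u \<in> polys_in A" "g \<in> polys_in B" for u g
    using tensor_op_mult[OF lin linop_id_op that] that by (simp add: mult_op_def)
  fix m m' :: "nat \<Rightarrow>\<^sub>0 nat" assume m: "keys m \<subseteq> A \<union> B" and m': "keys m' \<subseteq> A \<union> B"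
  let ?u = "monom (mrestrict A m) :: 'a mpoly" and ?u' = "monom (mrestrict A m') :: 'a mpoly"
  let ?g = "monom (mrestrict B m) :: 'a mpoly" and ?g' = "monom (mrestrict B m') :: 'a mpoly"
  have u: "?u \<in> polys_in A" "?u' \<in> polys_in A" and g: "?g \<in> polys_in B" "?g' \<in> polys_in B"
    by (auto intro: polys_in_single simp: keys_mrestrict)
  have "?D (monom m * monom m') = ?D ((?u * ?u') * (?g * ?g'))"
    unfolding monom_split[OF m] monom_split[OF m'] by (simp add: ac_simps)
  also have "\<dots> = (?u * \<theta> ?u' + ?u' * \<theta> ?u) * (?g * ?g')"
    using u g by (simp add: D polys_in_mult derivationsD(2)[OF \<theta>])
  also have "\<dots> = monom m * ?D (monom m') + monom m' * ?D (monom m)"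
    using u g by (simp add: monom_split[OF m] monom_split[OF m'] D algebra_simps)
  finally show "?D (monom m * monom m') = monom m * ?D (monom m') + monom m' * ?D (monom m)" .
qed

lemma tensor_op_diff_ops_left:
  assumes "a \<in> diff_ops (polys_in A)"
  shows "tensor_op A B a (id_op B) \<in> diff_ops (polys_in (A \<union> B))"
  using assms
proof (induct rule: diff_ops.induct)
  case (der \<theta>) then show ?case by (intro diff_ops.der tensor_op_derivation_left)
next
  case (mult p)
  then show ?case
    using tensor_op_mult_op[OF mult] by (simp add: diff_ops.mult polys_in_Un1)
next
  case (add P R) then show ?case by (simp add: tensor_op_add_left diff_ops.add)
next
  case (smult P c) then show ?case by (simp add: tensor_op_smult_left diff_ops.smult)
next
  case (comp P R)
  have "tensor_op A B (P \<circ> R) (id_op B) = tensor_op A B P (id_op B) \<circ> tensor_op A B R (id_op B)"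
    using tensor_op_comp[OF linop_diff_ops linop_diff_ops linop_id_op linop_id_op, OF comp(1,3)]
    by (simp add: comp_id_op_left[OF linop_id_op])
  then show ?case using diff_ops.comp[OF comp(2,4)] by (simp add: comp_def)
qed

end

lemma tensor_op_diff_ops:
  assumes disjoint: "A \<inter> B = {}" and a: "a \<in> diff_ops (polys_in A)" and b: "b \<in> diff_ops (polys_in B)"
  shows "tensor_op A B a b \<in> diff_ops (polys_in (A \<union> B))"
proof -
  have la: "linop (polys_in A) a" and lb: "linop (polys_in B) b"
    using a b by (auto intro: linop_diff_ops)
  have "tensor_op A B a b = tensor_op A B a (id_op B) \<circ> tensor_op A B (id_op A) b"
    using tensor_op_comp[OF disjoint la linop_id_op linop_id_op lb]
    by (simp add: comp_id_op_right[OF la] comp_id_op_left[OF lb])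
  moreover have "tensor_op A B (id_op A) b \<in> diff_ops (polys_in (A \<union> B))"
    using tensor_op_diff_ops_left[of B A b] disjoint b by (simp add: tensor_op_swap Un_commute Int_commute)
  ultimately show ?thesis
    using tensor_op_diff_ops_left[OF disjoint a] by (simp add: diff_ops.comp)
qed

lemma lookup_tsmult: "lookup (tsmult c \<phi>) x = c * lookup \<phi> x"
  unfolding tsmult_def by (rule lookup_map_times)

lemma keys_tsmult: "keys (tsmult c \<phi>) \<subseteq> keys \<phi>"
  by (auto simp: in_keys_iff lookup_tsmult)

lemma tsmult_minus_one: "tsmult (-1) \<phi> = - \<phi>"
  by (rule poly_mapping_eqI) (simp add: lookup_tsmult)

lemma tsmult_0 [simp]: "tsmult 0 \<phi> = 0"
  by (rule poly_mapping_eqI) (simp add: lookup_tsmult)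

lemma lookup_tgen: "lookup (tgen a b) x = (if x = (a, b) then 1 else 0)"
  unfolding tgen_def by (simp add: lookup_single when_def eq_commute)

lemma keys_tgen: "keys (tgen a b) = {(a, b)}"
  unfolding tgen_def by simp

lemma tfree_0 [simp]: "0 \<in> tfree A B"
  unfolding tfree_def by simp

lemma tfree_add: "\<phi> \<in> tfree A B \<Longrightarrow> \<psi> \<in> tfree A B \<Longrightarrow> \<phi> + \<psi> \<in> tfree A B"
  unfolding tfree_def mem_Collect_eq using keys_add[of \<phi> \<psi>] by (rule order_trans) simp

lemma tfree_tsmult: "\<phi> \<in> tfree A B \<Longrightarrow> tsmult c \<phi> \<in> tfree A B"
  unfolding tfree_def mem_Collect_eq using keys_tsmult[of c \<phi>] by (rule order_trans)

lemma tfree_tgen: "a \<in> A \<Longrightarrow> b \<in> B \<Longrightarrow> tgen a b \<in> tfree A B"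
  unfolding tfree_def by (simp add: keys_tgen)

lemma tfree_sum: "(\<And>i. i \<in> K \<Longrightarrow> f i \<in> tfree A B) \<Longrightarrow> sum f K \<in> tfree A B"
  by (induct K rule: infinite_finite_induct) (auto intro: tfree_add)

lemma tfree_keys: "\<phi> \<in> tfree A B \<Longrightarrow> x \<in> keys \<phi> \<Longrightarrow> fst x \<in> A \<and> snd x \<in> B"
  unfolding tfree_def by auto

lemma tfree_expansion: "\<phi> = (\<Sum>x\<in>keys \<phi>. tsmult (lookup \<phi> x) (tgen (fst x) (snd x)))"
proof (rule poly_mapping_eqI)
  fix k
  have "lookup (\<Sum>x\<in>keys \<phi>. tsmult (lookup \<phi> x) (tgen (fst x) (snd x))) k
      = (\<Sum>x\<in>keys \<phi>. if x = k then lookup \<phi> x else 0)"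
    unfolding lookup_sum lookup_tsmult lookup_tgen by (intro sum.cong) auto
  then show "lookup \<phi> k = lookup (\<Sum>x\<in>keys \<phi>. tsmult (lookup \<phi> x) (tgen (fst x) (snd x))) k"
    by (simp add: in_keys_iff)
qed

lemma trel_diff: "\<phi> \<in> trel A B \<Longrightarrow> \<psi> \<in> trel A B \<Longrightarrow> \<phi> - \<psi> \<in> trel A B"
  using trel.sum[OF _ trel.scal[of \<psi> A B "-1"]] by (simp add: tsmult_minus_one)

lemma trel_sum: "(\<And>i. i \<in> K \<Longrightarrow> f i \<in> trel A B) \<Longrightarrow> sum f K \<in> trel A B"
  by (induct K rule: infinite_finite_induct) (auto intro: trel.sum trel.zero)

definition tensor_map :: "nat set \<Rightarrow> nat set \<Rightarrow> (('k op \<times> 'k op) \<Rightarrow>\<^sub>0 'k::comm_ring_1) \<Rightarrow> 'k op" where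
  "tensor_map A B \<phi> = opsum (keys \<phi>) (\<lambda>x. op_smult (lookup \<phi> x) (tensor_op A B (fst x) (snd x)))"

lemma tensor_map_mono_neutral:
  assumes "finite K" "keys \<phi> \<subseteq> K"
  shows "tensor_map A B \<phi> = opsum K (\<lambda>x. op_smult (lookup \<phi> x) (tensor_op A B (fst x) (snd x)))"
  unfolding tensor_map_def by (rule opsum_mono_neutral) (use assms in \<open>auto simp: in_keys_iff\<close>)

lemma tensor_map_add: "tensor_map A B (\<phi> + \<psi>) = op_add (tensor_map A B \<phi>) (tensor_map A B \<psi>)"
proof -
  let ?K = "keys \<phi> \<union> keys \<psi>"
  have "keys (\<phi> + \<psi>) \<subseteq> ?K" by (rule keys_add)
  then show ?thesis
    using tensor_map_mono_neutral[of ?K]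
    by (simp add: opsum_def op_add_def op_smult_def lookup_add mconst_add distrib_right sum.distrib)
qed

lemma tensor_map_tsmult: "tensor_map A B (tsmult c \<phi>) = op_smult c (tensor_map A B \<phi>)"
  using tensor_map_mono_neutral[OF finite_keys keys_tsmult, of A B c \<phi>]
  by (simp add: tensor_map_def opsum_def op_smult_def lookup_tsmult mconst_mult sum_distrib_left mult.assoc)

lemma tensor_map_0 [simp]: "tensor_map A B 0 = (\<lambda>_. 0)"
  by (simp add: tensor_map_def)

lemma tensor_map_tgen: "tensor_map A B (tgen a b) = tensor_op A B a b"
  by (simp add: tensor_map_def keys_tgen lookup_tgen opsum_def)

lemma tensor_map_diff: "tensor_map A B (\<phi> - \<psi>) = (\<lambda>q. tensor_map A B \<phi> q - tensor_map A B \<psi> q)"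
  using tensor_map_add[of A B \<phi> "- \<psi>"] tensor_map_tsmult[of A B "-1" \<psi>]
  by (simp add: tsmult_minus_one op_add_def op_smult_def mconst_uminus)

lemma tensor_map_sum: "tensor_map A B (sum f K) = opsum K (\<lambda>i. tensor_map A B (f i))"
  by (induct K rule: infinite_finite_induct) (simp_all add: tensor_map_add opsum_def op_add_def)

lemma tensor_map_trel: "\<phi> \<in> trel X Y \<Longrightarrow> tensor_map A B \<phi> = (\<lambda>_. 0)"
proof (induct rule: trel.induct)
  case (addl a a' b) then show ?case
    by (simp add: tensor_map_diff tensor_map_tgen tensor_op_add_left) (simp add: op_add_def)
next
  case (addr a b b') then show ?case
    by (simp add: tensor_map_diff tensor_map_tgen tensor_op_add_right) (simp add: op_add_def)
next
  case (smultl a b c) then show ?case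
    by (simp add: tensor_map_diff tensor_map_tgen tensor_op_smult_left tensor_map_tsmult)
next
  case (smultr a b c) then show ?case
    by (simp add: tensor_map_diff tensor_map_tgen tensor_op_smult_right tensor_map_tsmult)
qed (simp_all add: tensor_map_add tensor_map_tsmult op_add_def op_smult_def)

lemma tensor_map_eq_if_trel: "\<phi> - \<psi> \<in> trel X Y \<Longrightarrow> tensor_map A B \<phi> = tensor_map A B \<psi>"
  using tensor_map_trel[of "\<phi> - \<psi>"] by (auto simp: tensor_map_diff fun_eq_iff)

lemma partial_deriv_Un_left:
  assumes disjoint: "A \<inter> B = {}" and i: "i \<in> A"
  shows "partial_deriv (A \<union> B) i = (tensor_op A B (partial_deriv A i) (id_op B) :: 'k::comm_ring_1 op)"
proof (rule derivation_eqI[OF partial_deriv_derivation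
      tensor_op_derivation_left[OF disjoint partial_deriv_derivation]])
  have T: "tensor_op A B (partial_deriv A i) (id_op B) (u * g) = partial_deriv A i u * g"
    if "u \<in> polys_in A" "g \<in> polys_in B" for u g
    using tensor_op_mult[OF disjoint linop_partial_deriv linop_id_op that] that by (simp add: mult_op_def)
  fix j assume "j \<in> A \<union> B"
  then consider "j \<in> A" | "j \<in> B" "i \<noteq> j" using disjoint i by blast
  then show "partial_deriv (A \<union> B) i (mvar j) = tensor_op A B (partial_deriv A i) (id_op B) (mvar j)"
  proof cases
    case 1
    then show ?thesis using T[of "mvar j" 1] by (auto simp: partial_deriv_mvar polys_in_mvar)
  next
    case 2
    then show ?thesis
      using T[of 1 "mvar j"]
      by (simp add: partial_deriv_mvar polys_in_mvar derivation_one[OF partial_deriv_derivation])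
  qed
qed

lemma partial_deriv_Un_right:
  assumes "A \<inter> B = {}" and "i \<in> B"
  shows "partial_deriv (A \<union> B) i = tensor_op A B (id_op A) (partial_deriv B i)"
  using partial_deriv_Un_left[of B A i] assms by (simp add: Int_commute Un_commute tensor_op_swap)

context
  fixes A B :: "nat set"
  assumes disjoint: "A \<inter> B = {}"
begin

abbreviation tensor_range :: "'k::comm_ring_1 op set" where
  "tensor_range \<equiv> tensor_map A B ` tfree (diff_ops (polys_in A)) (diff_ops (polys_in B))"

lemma tensor_range_add: "P \<in> tensor_range \<Longrightarrow> R \<in> tensor_range \<Longrightarrow> op_add P R \<in> tensor_range"
  by (auto simp: tensor_map_add[symmetric] intro!: imageI tfree_add)

lemma tensor_range_smult: "P \<in> tensor_range \<Longrightarrow> op_smult c P \<in> tensor_range"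
  by (auto simp: tensor_map_tsmult[symmetric] intro!: imageI tfree_tsmult)

lemma tensor_range_opsum: "(\<And>i. i \<in> K \<Longrightarrow> f i \<in> tensor_range) \<Longrightarrow> opsum K f \<in> tensor_range"
proof (rule opsum_closed[OF _ tensor_range_add])
  show "(\<lambda>_. 0) \<in> tensor_range" by (rule image_eqI[of _ _ 0]) simp_all
qed

lemma tensor_range_tensor_op:
  "a \<in> diff_ops (polys_in A) \<Longrightarrow> b \<in> diff_ops (polys_in B) \<Longrightarrow> tensor_op A B a b \<in> tensor_range"
  by (metis image_eqI tensor_map_tgen tfree_tgen)

lemma tensor_range_expansion:
  assumes "P \<in> tensor_range"
  obtains \<phi> where "\<phi> \<in> tfree (diff_ops (polys_in A)) (diff_ops (polys_in B))"
    and "P = opsum (keys \<phi>) (\<lambda>x. op_smult (lookup \<phi> x) (tensor_op A B (fst x) (snd x)))"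
  using assms unfolding tensor_map_def by blast

lemma tensor_op_comp_tensor_range:
  assumes a: "a \<in> diff_ops (polys_in A)" and b: "b \<in> diff_ops (polys_in B)" and R: "R \<in> tensor_range"
  shows "tensor_op A B a b \<circ> R \<in> tensor_range"
proof -
  obtain \<psi> where \<psi>: "\<psi> \<in> tfree (diff_ops (polys_in A)) (diff_ops (polys_in B))"
    and R_eq: "R = opsum (keys \<psi>) (\<lambda>y. op_smult (lookup \<psi> y) (tensor_op A B (fst y) (snd y)))"
    using R by (rule tensor_range_expansion)
  have la: "linop (polys_in A) a" and lb: "linop (polys_in B) b"
    using a b by (auto intro: linop_diff_ops)
  have ly: "linop (polys_in A) (fst y)" "linop (polys_in B) (snd y)" if "y \<in> keys \<psi>" for y
    using tfree_keys[OF \<psi> that] by (auto intro: linop_diff_ops)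
  have T: "linop (polys_in (A \<union> B)) (tensor_op A B a b)" by (rule linop_tensor_op[OF la lb])
  have Ty: "linop (polys_in (A \<union> B)) (tensor_op A B (fst y) (snd y))" if "y \<in> keys \<psi>" for y
    using ly[OF that] by (rule linop_tensor_op)
  have "tensor_op A B a b \<circ> R =
      opsum (keys \<psi>) (\<lambda>y. tensor_op A B a b \<circ> op_smult (lookup \<psi> y) (tensor_op A B (fst y) (snd y)))"
    unfolding R_eq by (rule opsum_comp_left[OF T finite_keys]) (auto intro: linop_in_polys linop_op_smult Ty)
  also have "\<dots> = opsum (keys \<psi>) (\<lambda>y. op_smult (lookup \<psi> y) (tensor_op A B (a \<circ> fst y) (b \<circ> snd y)))"
    by (intro opsum_cong)
       (simp add: op_smult_comp_left[OF T linop_in_polys[OF Ty]] tensor_op_comp[OF disjoint la _ lb] ly)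
  also have "\<dots> \<in> tensor_range"
    using a b tfree_keys[OF \<psi>]
    by (intro tensor_range_opsum tensor_range_smult tensor_range_tensor_op diff_ops.comp) auto
  finally show ?thesis .
qed

lemma tensor_range_comp: "P \<in> tensor_range \<Longrightarrow> R \<in> tensor_range \<Longrightarrow> P \<circ> R \<in> tensor_range"
  by (erule tensor_range_expansion)
     (auto simp: opsum_comp_right op_smult_comp_right dest: tfree_keys
       intro!: tensor_range_opsum tensor_range_smult tensor_op_comp_tensor_range)

lemma tensor_range_mult_op:
  assumes p: "p \<in> polys_in (A \<union> B)"
  shows "mult_op (polys_in (A \<union> B)) p \<in> tensor_range"
proof -
  have "mult_op (polys_in (A \<union> B)) (monom m) \<in> tensor_range" if m: "keys m \<subseteq> A \<union> B" for m
  proof -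
    have "mult_op (polys_in (A \<union> B)) (monom m) =
        tensor_op A B (mult_op (polys_in A) (monom (mrestrict A m)))
          (mult_op (polys_in B) (monom (mrestrict B m)))"
      by (simp add: tensor_op_mult_op[OF disjoint] polys_in_single keys_mrestrict monom_split[OF disjoint m])
    also have "\<dots> \<in> tensor_range"
      by (intro tensor_range_tensor_op diff_ops.mult polys_in_single) (auto simp: keys_mrestrict)
    finally show ?thesis .
  qed
  then have "opsum (keys p) (\<lambda>m. op_smult (lookup p m) (mult_op (polys_in (A \<union> B)) (monom m))) \<in> tensor_range"
    using p by (intro tensor_range_opsum tensor_range_smult) (auto simp: polys_in_iff)
  then show ?thesis
    by (subst mpoly_monomial_expansion) (simp add: mult_op_sum mult_op_smult)
qed

lemma tensor_range_derivation:
  assumes fin: "finite A" "finite B" and \<theta>: "\<theta> \<in> derivations (polys_in (A \<union> B))"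
  shows "\<theta> \<in> tensor_range"
proof -
  have "partial_deriv (A \<union> B) i \<in> tensor_range" if "i \<in> A \<union> B" for i
  proof (cases "i \<in> A")
    case True
    then show ?thesis unfolding partial_deriv_Un_left[OF disjoint True]
      by (intro tensor_range_tensor_op diff_ops.der diff_ops.mult partial_deriv_derivation polys_in_1)
  next
    case False
    with that have "i \<in> B" by blast
    then show ?thesis unfolding partial_deriv_Un_right[OF disjoint \<open>i \<in> B\<close>]
      by (intro tensor_range_tensor_op diff_ops.der diff_ops.mult partial_deriv_derivation polys_in_1)
  qed
  moreover have "\<theta> (mvar i) \<in> polys_in (A \<union> B)" if "i \<in> A \<union> B" for i
    using that by (intro linopD(1)[OF derivationsD(1)[OF \<theta>]] polys_in_mvar)
  ultimately have "opsum (A \<union> B) (\<lambda>i. mult_op (polys_in (A \<union> B)) (\<theta> (mvar i)) \<circ> partial_deriv (A \<union> B) i)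
      \<in> tensor_range"
    by (intro tensor_range_opsum tensor_range_comp tensor_range_mult_op)
  then show ?thesis
    using derivation_expansion[OF _ \<theta> partial_deriv_derivation partial_deriv_mvar] fin by simp
qed

lemma tensor_range_eq_diff_ops:
  assumes "finite A" "finite B"
  shows "tensor_range = diff_ops (polys_in (A \<union> B))"
proof
  show "diff_ops (polys_in (A \<union> B)) \<subseteq> tensor_range"
  proof
    fix P assume "P \<in> diff_ops (polys_in (A \<union> B))"
    then show "P \<in> tensor_range"
      by (induct rule: diff_ops.induct)
         (auto intro: tensor_range_derivation[OF assms] tensor_range_mult_op tensor_range_add
           tensor_range_smult tensor_range_comp[unfolded comp_def])
  qed
  show "tensor_range \<subseteq> diff_ops (polys_in (A \<union> B))"
    unfolding tensor_map_def
    by (auto intro!: diff_ops_opsum diff_ops.smult tensor_op_diff_ops[OF disjoint] dest: tfree_keys)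
qed

end

section \<open>Linear algebra over a field\<close>

definition eval_comb :: "('x \<Rightarrow>\<^sub>0 'k::comm_ring_1) \<Rightarrow> ('x \<Rightarrow> 'k) \<Rightarrow> 'k" where
  "eval_comb w g = (\<Sum>x\<in>keys w. lookup w x * g x)"

lemma eval_comb_mono_neutral:
  "finite K \<Longrightarrow> keys w \<subseteq> K \<Longrightarrow> eval_comb w g = (\<Sum>x\<in>K. lookup w x * g x)"
  unfolding eval_comb_def by (rule sum.mono_neutral_left) (auto simp: in_keys_iff)

lemma eval_comb_add: "eval_comb (w + w') g = eval_comb w g + eval_comb w' g"
proof -
  let ?K = "keys w \<union> keys w'"
  have "eval_comb (w + w') g = (\<Sum>x\<in>?K. lookup (w + w') x * g x)"
    by (rule eval_comb_mono_neutral) (auto dest: keys_add[THEN subsetD])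
  also have "\<dots> = eval_comb w g + eval_comb w' g"
    using eval_comb_mono_neutral[of ?K w g] eval_comb_mono_neutral[of ?K w' g]
    by (simp add: lookup_add distrib_right sum.distrib)
  finally show ?thesis .
qed

lemma eval_comb_single: "eval_comb (Poly_Mapping.single x c) g = c * g x"
  by (simp add: eval_comb_def)

lemma eval_comb_scale: "eval_comb (Poly_Mapping.map ((*) c) w) g = c * eval_comb w g"
proof -
  have "keys (Poly_Mapping.map ((*) c) w) \<subseteq> keys w"
    by (rule subsetI) (metis in_keys_iff lookup_map_times mult_zero_right)
  then have "eval_comb (Poly_Mapping.map ((*) c) w) g =
      (\<Sum>x\<in>keys w. lookup (Poly_Mapping.map ((*) c) w) x * g x)"
    by (rule eval_comb_mono_neutral[OF finite_keys])
  then show ?thesis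
    by (simp add: eval_comb_def lookup_map_times sum_distrib_left mult.assoc)
qed

lemma eval_comb_sum: "eval_comb (\<Sum>a\<in>F. w a) g = (\<Sum>a\<in>F. eval_comb (w a) g)"
  by (induct F rule: infinite_finite_induct) (simp_all add: eval_comb_add eval_comb_def[of 0])

definition fun_independent :: "'i set \<Rightarrow> ('i \<Rightarrow> 'x \<Rightarrow> 'k::field) \<Rightarrow> bool" where
  "fun_independent F h \<longleftrightarrow> (\<forall>c. (\<forall>x. (\<Sum>a\<in>F. c a * h a x) = 0) \<longrightarrow> (\<forall>a\<in>F. c a = 0))"

lemma fun_independent_insertD:
  assumes ind: "fun_independent (insert a' F) h" and "a' \<notin> F" "finite F"
  shows "fun_independent F h" and "\<exists>x. h a' x \<noteq> (\<Sum>a\<in>F. c a * h a x)"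
proof -
  show "fun_independent F h"
    unfolding fun_independent_def
  proof (intro allI impI ballI)
    fix c a assume c: "\<forall>x. (\<Sum>a\<in>F. c a * h a x) = 0" and a: "a \<in> F"
    have "(\<Sum>b\<in>insert a' F. (c(a' := 0)) b * h b x) = (\<Sum>b\<in>F. c b * h b x)" for x
      using \<open>a' \<notin> F\<close> \<open>finite F\<close> by (simp, intro sum.cong) auto
    then have "\<forall>x. (\<Sum>b\<in>insert a' F. (c(a' := 0)) b * h b x) = 0" using c by simp
    then have "(c(a' := 0)) a = 0" using ind a unfolding fun_independent_def by blast
    moreover have "a \<noteq> a'" using a \<open>a' \<notin> F\<close> by blast
    ultimately show "c a = 0" by simp
  qed
  show "\<exists>x. h a' x \<noteq> (\<Sum>a\<in>F. c a * h a x)"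
  proof (rule ccontr)
    assume "\<not> ?thesis"
    moreover have "(\<Sum>b\<in>F. (if b = a' then 1 else - c b) * h b x) = - (\<Sum>a\<in>F. c a * h a x)" for x
      using \<open>a' \<notin> F\<close> by (simp add: sum_negf[symmetric], intro sum.cong) auto
    ultimately have "\<forall>x. (\<Sum>b\<in>insert a' F. (if b = a' then 1 else - c b) * h b x) = 0"
      using \<open>a' \<notin> F\<close> \<open>finite F\<close> by simp
    then show False using ind unfolding fun_independent_def by force
  qed
qed

lemma eval_comb_extend_dual:
  fixes h :: "'i \<Rightarrow> 'x \<Rightarrow> 'k::field"
  assumes fin: "finite F"
    and L: "\<And>a0 a. a0 \<in> F \<Longrightarrow> a \<in> F \<Longrightarrow> eval_comb (L a0) (h a) = (if a = a0 then 1 else 0)"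
    and x0: "h a' x0 \<noteq> (\<Sum>a\<in>F. eval_comb (L a) (h a') * h a x0)"
  obtains w where "eval_comb w (h a') = 1" and "\<And>b. b \<in> F \<Longrightarrow> eval_comb w (h b) = 0"
proof
  define v where "v = h a' x0 - (\<Sum>a\<in>F. eval_comb (L a) (h a') * h a x0)"
  define w where "w = Poly_Mapping.map ((*) (1 / v))
      (Poly_Mapping.single x0 1 + (\<Sum>a\<in>F. Poly_Mapping.map ((*) (- h a x0)) (L a)))"
  have w: "eval_comb w g = (g x0 - (\<Sum>a\<in>F. h a x0 * eval_comb (L a) g)) / v" for g
    unfolding w_def by (simp add: eval_comb_scale eval_comb_add eval_comb_single eval_comb_sum sum_negf)
  show "eval_comb w (h a') = 1"
    using x0 unfolding w v_def by (simp add: mult.commute)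
  fix b assume b: "b \<in> F"
  have "(\<Sum>a\<in>F. h a x0 * eval_comb (L a) (h b)) = (\<Sum>a\<in>F. if a = b then h b x0 else 0)"
    using b by (intro sum.cong) (auto simp: L)
  then show "eval_comb w (h b) = 0" using b fin by (simp add: w)
qed

lemma fun_independent_dual:
  assumes "finite F" "fun_independent F h"
  shows "\<forall>a0\<in>F. \<exists>w. \<forall>a\<in>F. eval_comb w (h a) = (if a = a0 then 1 else 0)"
  using assms
proof (induct F rule: finite_induct)
  case (insert a' F)
  have "\<forall>a0\<in>F. \<exists>w. \<forall>a\<in>F. eval_comb w (h a) = (if a = a0 then 1 else 0)"
    by (rule insert(3)[OF fun_independent_insertD(1)[OF insert(4,2,1)]])
  then obtain L where L: "\<And>a0 a. a0 \<in> F \<Longrightarrow> a \<in> F \<Longrightarrow> eval_comb (L a0) (h a) = (if a = a0 then 1 else 0)"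
    by metis
  obtain x0 where "h a' x0 \<noteq> (\<Sum>a\<in>F. eval_comb (L a) (h a') * h a x0)"
    using fun_independent_insertD(2)[OF insert(4,2,1), where c="\<lambda>a. eval_comb (L a) (h a')"] by blast
  then obtain w' where w': "eval_comb w' (h a') = 1" "\<And>b. b \<in> F \<Longrightarrow> eval_comb w' (h b) = 0"
    using eval_comb_extend_dual[OF insert(1) L] by blast
  show ?case
  proof
    fix a0 assume a0: "a0 \<in> insert a' F"
    show "\<exists>w. \<forall>a\<in>insert a' F. eval_comb w (h a) = (if a = a0 then 1 else 0)"
    proof (cases "a0 = a'")
      case True
      then show ?thesis using w' insert(2) by (intro exI[of _ w']) auto
    next
      case False
      then have "a0 \<in> F" using a0 by simp
      let ?w = "L a0 + Poly_Mapping.map ((*) (- eval_comb (L a0) (h a'))) w'"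
      have "\<forall>a\<in>insert a' F. eval_comb ?w (h a) = (if a = a0 then 1 else 0)"
        using L[OF \<open>a0 \<in> F\<close>] w' False insert(2) by (auto simp: eval_comb_add eval_comb_scale)
      then show ?thesis by blast
    qed
  qed
qed simp

definition op_subspace :: "'k::comm_ring_1 op set \<Rightarrow> bool" where
  "op_subspace X \<longleftrightarrow> (\<lambda>_. 0) \<in> X \<and> (\<forall>a\<in>X. \<forall>a'\<in>X. op_add a a' \<in> X) \<and> (\<forall>c. \<forall>a\<in>X. op_smult c a \<in> X)"

lemma op_subspaceD:
  assumes "op_subspace X"
  shows "(\<lambda>_. 0) \<in> X" "a \<in> X \<Longrightarrow> a' \<in> X \<Longrightarrow> op_add a a' \<in> X" "a \<in> X \<Longrightarrow> op_smult c a \<in> X"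
  using assms unfolding op_subspace_def by blast+

lemma op_subspace_opsum: "op_subspace X \<Longrightarrow> (\<And>i. i \<in> K \<Longrightarrow> f i \<in> X) \<Longrightarrow> opsum K f \<in> X"
  by (rule opsum_closed) (auto dest: op_subspaceD)

lemma op_subspace_diff_ops: "op_subspace (diff_ops (polys_in I))"
  unfolding op_subspace_def by (auto intro: diff_ops_zero diff_ops.add diff_ops.smult)

definition ops_independent :: "'i set \<Rightarrow> ('i \<Rightarrow> 'k::comm_ring_1 op) \<Rightarrow> bool" where
  "ops_independent I fa \<longleftrightarrow> (\<forall>c. opsum I (\<lambda>i. op_smult (c i) (fa i)) = (\<lambda>_. 0) \<longrightarrow> (\<forall>i\<in>I. c i = 0))"

lemma ops_dependency_solve:
  fixes fa :: "'i \<Rightarrow> 'k::field op"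
  assumes fin: "finite I" and dep: "opsum I (\<lambda>i. op_smult (c i) (fa i)) = (\<lambda>_. 0)"
    and i0: "i0 \<in> I" "c i0 \<noteq> 0"
  shows "fa i0 = opsum (I - {i0}) (\<lambda>i. op_smult (- c i / c i0) (fa i))"
proof
  let ?G = "I - {i0}" and ?d = "\<lambda>i. - c i / c i0"
  fix q
  have "opsum I (\<lambda>i. op_smult (c i) (fa i)) q =
      mconst (c i0) * fa i0 q + opsum ?G (\<lambda>i. op_smult (c i) (fa i)) q"
    unfolding opsum_def op_smult_def using fin i0(1) by (simp add: sum.remove)
  then have h: "mconst (c i0) * fa i0 q = - opsum ?G (\<lambda>i. op_smult (c i) (fa i)) q"
    using dep by (simp add: eq_neg_iff_add_eq_0)
  have "fa i0 q = mconst (inverse (c i0)) * (mconst (c i0) * fa i0 q)"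
    using i0(2) by (simp add: mult.assoc[symmetric] mconst_mult[symmetric])
  also have "\<dots> = opsum ?G (\<lambda>i. op_smult (?d i) (fa i)) q"
    unfolding h opsum_def op_smult_def
    by (simp add: sum_distrib_left mult.assoc[symmetric] mconst_mult[symmetric] sum_negf[symmetric]
        mconst_uminus divide_inverse mult.commute)
  finally show "fa i0 q = opsum ?G (\<lambda>i. op_smult (?d i) (fa i)) q" .
qed

context
  fixes X Y :: "'k::field op set"
  assumes X: "op_subspace X" and Y: "op_subspace Y"
begin

lemma tgen_zero_right: "a \<in> X \<Longrightarrow> tgen a (\<lambda>_. 0) \<in> trel X Y"
  using trel.smultr[OF _ op_subspaceD(1)[OF Y], where c=0] by (simp add: op_smult_def)

lemma tgen_lincomb_left:
  assumes "finite G" "\<And>i. i \<in> G \<Longrightarrow> fa i \<in> X" "b \<in> Y"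
  shows "tgen (opsum G (\<lambda>i. op_smult (d i) (fa i))) b - (\<Sum>i\<in>G. tgen (fa i) (op_smult (d i) b)) \<in> trel X Y"
  using assms(1,2)
proof (induct G rule: finite_induct)
  case empty
  then show ?case using trel.smultl[OF op_subspaceD(1)[OF X] assms(3), where c=0] by (simp add: op_smult_def)
next
  case (insert x F)
  let ?S = "opsum F (\<lambda>i. op_smult (d i) (fa i))" and ?x = "op_smult (d x) (fa x)"
  have x: "fa x \<in> X" "?x \<in> X" and S: "?S \<in> X"
    using insert by (auto intro: op_subspace_opsum[OF X] op_subspaceD(3)[OF X])
  have t1: "tgen (op_add ?x ?S) b - tgen ?x b - tgen ?S b \<in> trel X Y"
    by (rule trel.addl[OF x(2) S assms(3)])
  have t2: "tgen ?x b - tsmult (d x) (tgen (fa x) b) \<in> trel X Y"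
    using x assms(3) by (intro trel.smultl)
  have t3: "tgen (fa x) (op_smult (d x) b) - tsmult (d x) (tgen (fa x) b) \<in> trel X Y"
    using x assms(3) by (intro trel.smultr)
  have "(tgen (op_add ?x ?S) b - tgen ?x b - tgen ?S b) + (tgen ?x b - tsmult (d x) (tgen (fa x) b))
      - (tgen (fa x) (op_smult (d x) b) - tsmult (d x) (tgen (fa x) b))
      + (tgen ?S b - (\<Sum>i\<in>F. tgen (fa i) (op_smult (d i) b))) \<in> trel X Y"
    using insert(3,4) by (intro trel.sum[OF trel_diff[OF trel.sum[OF t1 t2] t3]]) auto
  then show ?case
    using insert(1,2) by (simp add: opsum_insert algebra_simps)
qed

lemma tensor_eliminate_dependent:
  assumes fin: "finite I" and fa: "\<And>i. i \<in> I \<Longrightarrow> fa i \<in> X" and fb: "\<And>i. i \<in> I \<Longrightarrow> fb i \<in> Y"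
    and dep: "opsum I (\<lambda>i. op_smult (c i) (fa i)) = (\<lambda>_. 0)" and i0: "i0 \<in> I" "c i0 \<noteq> 0"
  defines "fb' \<equiv> \<lambda>i. op_add (fb i) (op_smult (- c i / c i0) (fb i0))"
  shows "(\<forall>i\<in>I - {i0}. fb' i \<in> Y) \<and>
    (\<Sum>i\<in>I. tgen (fa i) (fb i)) - (\<Sum>i\<in>I - {i0}. tgen (fa i) (fb' i)) \<in> trel X Y"
proof
  let ?G = "I - {i0}" and ?d = "\<lambda>i. - c i / c i0"
  show "\<forall>i\<in>?G. fb' i \<in> Y"
  proof
    fix i assume "i \<in> ?G"
    then show "fb' i \<in> Y"
      unfolding fb'_def using fb i0(1) by (intro op_subspaceD(2)[OF Y] op_subspaceD(3)[OF Y]) auto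
  qed
  have "fa i0 = opsum ?G (\<lambda>i. op_smult (?d i) (fa i))"
    using fin dep i0 by (rule ops_dependency_solve)
  then have "tgen (fa i0) (fb i0) - (\<Sum>i\<in>?G. tgen (fa i) (op_smult (?d i) (fb i0))) \<in> trel X Y"
    using tgen_lincomb_left[of ?G fa "fb i0" ?d] fin fa fb i0(1) by simp
  moreover have "(\<Sum>i\<in>?G. tgen (fa i) (fb' i) - tgen (fa i) (fb i) - tgen (fa i) (op_smult (?d i) (fb i0)))
      \<in> trel X Y"
    unfolding fb'_def using fa fb i0(1) by (intro trel_sum trel.addr op_subspaceD(3)[OF Y]) auto
  ultimately have "(tgen (fa i0) (fb i0) - (\<Sum>i\<in>?G. tgen (fa i) (op_smult (?d i) (fb i0))))
      - (\<Sum>i\<in>?G. tgen (fa i) (fb' i) - tgen (fa i) (fb i) - tgen (fa i) (op_smult (?d i) (fb i0)))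
      \<in> trel X Y"
    by (rule trel_diff)
  then show "(\<Sum>i\<in>I. tgen (fa i) (fb i)) - (\<Sum>i\<in>?G. tgen (fa i) (fb' i)) \<in> trel X Y"
    using fin i0(1) by (simp add: sum.remove sum_subtractf sum.distrib algebra_simps)
qed

lemma tensor_reduce_independent:
  assumes "finite I" "\<And>i. i \<in> I \<Longrightarrow> fa i \<in> X" "\<And>i. i \<in> I \<Longrightarrow> fb i \<in> Y"
  shows "\<exists>I' fb'. I' \<subseteq> I \<and> (\<forall>i\<in>I'. fb' i \<in> Y) \<and> ops_independent I' fa \<and>
      (\<Sum>i\<in>I. tgen (fa i) (fb i)) - (\<Sum>i\<in>I'. tgen (fa i) (fb' i)) \<in> trel X Y"
  using assms
proof (induct "card I" arbitrary: I fb rule: less_induct)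
  case less
  show ?case
  proof (cases "ops_independent I fa")
    case True
    then show ?thesis using less.prems by (intro exI[of _ I] exI[of _ fb]) (auto intro: trel.zero)
  next
    case False
    then obtain c i0 where dep: "opsum I (\<lambda>i. op_smult (c i) (fa i)) = (\<lambda>_. 0)" "i0 \<in> I" "c i0 \<noteq> 0"
      unfolding ops_independent_def by blast
    define fb' where "fb' i = op_add (fb i) (op_smult (- c i / c i0) (fb i0))" for i
    have step: "\<forall>i\<in>I - {i0}. fb' i \<in> Y"
      "(\<Sum>i\<in>I. tgen (fa i) (fb i)) - (\<Sum>i\<in>I - {i0}. tgen (fa i) (fb' i)) \<in> trel X Y"
      using tensor_eliminate_dependent[of I fa fb c i0] less.prems dep unfolding fb'_def by blast+
    obtain I' fb'' where IH: "I' \<subseteq> I - {i0}" "\<forall>i\<in>I'. fb'' i \<in> Y" "ops_independent I' fa"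
      "(\<Sum>i\<in>I - {i0}. tgen (fa i) (fb' i)) - (\<Sum>i\<in>I'. tgen (fa i) (fb'' i)) \<in> trel X Y"
      using less.hyps[of "I - {i0}" fb'] less.prems step(1) dep(2) card_Diff1_less by fastforce
    have "(\<Sum>i\<in>I. tgen (fa i) (fb i)) - (\<Sum>i\<in>I'. tgen (fa i) (fb'' i)) \<in> trel X Y"
      using trel.sum[OF step(2) IH(4)] by simp
    then show ?thesis using IH(1-3) by blast
  qed
qed

lemma tfree_reduce_independent:
  assumes "\<phi> \<in> tfree X Y"
  obtains I' fb' where "I' \<subseteq> keys \<phi>" "\<forall>i\<in>I'. fb' i \<in> Y" "ops_independent I' fst"
    "\<phi> - (\<Sum>i\<in>I'. tgen (fst i) (fb' i)) \<in> trel X Y"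
proof -
  have k: "fst x \<in> X" "snd x \<in> Y" if "x \<in> keys \<phi>" for x using tfree_keys[OF assms that] by auto
  let ?s = "\<lambda>x. op_smult (lookup \<phi> x) (snd x)"
  have t: "(\<Sum>x\<in>keys \<phi>. tgen (fst x) (?s x) - tsmult (lookup \<phi> x) (tgen (fst x) (snd x))) \<in> trel X Y"
    using k by (intro trel_sum trel.smultr) auto
  have "\<exists>I' fb'. I' \<subseteq> keys \<phi> \<and> (\<forall>i\<in>I'. fb' i \<in> Y) \<and> ops_independent I' fst \<and>
      (\<Sum>x\<in>keys \<phi>. tgen (fst x) (?s x)) - (\<Sum>i\<in>I'. tgen (fst i) (fb' i)) \<in> trel X Y"
    by (rule tensor_reduce_independent) (use k in \<open>auto intro: op_subspaceD(3)[OF Y]\<close>)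
  then obtain I' fb' where r: "I' \<subseteq> keys \<phi>" "\<forall>i\<in>I'. fb' i \<in> Y" "ops_independent I' fst"
    "(\<Sum>x\<in>keys \<phi>. tgen (fst x) (?s x)) - (\<Sum>i\<in>I'. tgen (fst i) (fb' i)) \<in> trel X Y"
    by blast
  have "\<phi> - (\<Sum>i\<in>I'. tgen (fst i) (fb' i)) =
      ((\<Sum>x\<in>keys \<phi>. tgen (fst x) (?s x)) - (\<Sum>i\<in>I'. tgen (fst i) (fb' i)))
      - (\<Sum>x\<in>keys \<phi>. tgen (fst x) (?s x) - tsmult (lookup \<phi> x) (tgen (fst x) (snd x)))"
    by (subst (1) tfree_expansion) (simp add: sum_subtractf)
  also have "\<dots> \<in> trel X Y" using r(4) t by (rule trel_diff)
  finally show ?thesis using r(1-3) that by blast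
qed

end

section \<open>Coefficient extraction and the kernel of the tensor map\<close>

text \<open>\<open>extract_op A B P (u, e)\<close> is the operator \<open>g \<mapsto>\<close> (coefficient of \<open>x\<^sub>A\<^sup>e\<close> in \<open>P (x\<^sub>A\<^sup>u g)\<close>)
  on \<open>k[x\<^sub>B]\<close>.\<close>

definition op_coeff :: "'k::comm_ring_1 op \<Rightarrow> (nat \<Rightarrow>\<^sub>0 nat) \<times> (nat \<Rightarrow>\<^sub>0 nat) \<Rightarrow> 'k" where
  "op_coeff a x = lookup (a (monom (fst x))) (snd x)"

definition coeff_in :: "nat set \<Rightarrow> nat set \<Rightarrow> (nat \<Rightarrow>\<^sub>0 nat) \<Rightarrow> 'k::comm_ring_1 mpoly \<Rightarrow> 'k mpoly" where
  "coeff_in A B e = lin_ext (\<lambda>m. if mrestrict A m = e then monom (mrestrict B m) else 0)"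

definition extract_op :: "nat set \<Rightarrow> nat set \<Rightarrow> 'k::comm_ring_1 op \<Rightarrow> (nat \<Rightarrow>\<^sub>0 nat) \<times> (nat \<Rightarrow>\<^sub>0 nat) \<Rightarrow> 'k op" where
  "extract_op A B P x = (\<lambda>g. if g \<in> polys_in B \<and> keys (fst x) \<subseteq> A
      then coeff_in A B (snd x) (P (monom (fst x) * g)) else 0)"

lemma coeff_in_polys: "coeff_in A B e h \<in> polys_in B"
  unfolding coeff_in_def by (auto intro!: lin_ext_in_polys polys_in_single simp: keys_mrestrict)

lemma extract_op_opsum: "extract_op A B (opsum K f) x = opsum K (\<lambda>i. extract_op A B (f i) x)"
proof
  fix g
  show "extract_op A B (opsum K f) x g = opsum K (\<lambda>i. extract_op A B (f i) x) g"
  proof (cases "g \<in> polys_in B \<and> keys (fst x) \<subseteq> A")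
    case True
    then show ?thesis by (simp add: extract_op_def opsum_def coeff_in_def lin_ext_sum)
  next
    case False
    then show ?thesis by (simp add: extract_op_def opsum_def False)
  qed
qed

lemma extract_op_zero: "extract_op A B (\<lambda>_. 0) x = (\<lambda>_. 0)"
  by (simp add: extract_op_def coeff_in_def fun_eq_iff)

lemma extract_op_smult: "extract_op A B (op_smult c P) x = op_smult c (extract_op A B P x)"
  unfolding extract_op_def op_smult_def coeff_in_def by (simp add: lin_ext_smult fun_eq_iff)

lemma op_coeff_eq_0: "linop (polys_in A) a \<Longrightarrow> \<not> keys (fst x) \<subseteq> A \<Longrightarrow> op_coeff a x = 0"
  unfolding op_coeff_def by (simp add: linopD(2) polys_in_iff)

context
  fixes A B :: "nat set"
  assumes disjoint: "A \<inter> B = {}"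
begin

lemma coeff_in_mult:
  fixes h w :: "'k::comm_ring_1 mpoly"
  assumes "w \<in> polys_in B"
  shows "coeff_in A B e (h * w) = coeff_in A B e h * w"
proof (rule klinear_on_eqI2[where F="\<lambda>h w. coeff_in A B e (h * w)" and G="\<lambda>h w. coeff_in A B e h * w"
      and I=UNIV and J=B])
  have lin: "klinear_on S (coeff_in A B e :: 'k mpoly \<Rightarrow> 'k mpoly)" for S
    unfolding coeff_in_def by (rule klinear_on_lin_ext)
  fix h w :: "'k mpoly"
  show "klinear_on (polys_in UNIV) (\<lambda>h. coeff_in A B e (h * w))"
    by (rule klinear_on_comp[OF klinear_on_mult_right lin[of UNIV], unfolded comp_def]) simp
  show "klinear_on (polys_in B) (\<lambda>w. coeff_in A B e (h * w))"
    by (rule klinear_on_comp[OF klinear_on_mult_left lin[of UNIV], unfolded comp_def]) simp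
  show "klinear_on (polys_in UNIV) (\<lambda>h. coeff_in A B e h * w)"
    by (rule klinear_on_mult_right_comp[OF lin])
  show "klinear_on (polys_in B) (\<lambda>w. coeff_in A B e h * w)"
    by (rule klinear_on_mult_left)
next
  fix m m' :: "nat \<Rightarrow>\<^sub>0 nat" assume "keys m' \<subseteq> B"
  then have "mrestrict A m' = 0" "mrestrict B m' = m'"
    using disjoint by (auto intro: mrestrict_eq_0 mrestrict_id)
  then show "coeff_in A B e (monom m * monom m') = (coeff_in A B e (monom m) * monom m' :: 'k mpoly)"
    by (simp add: coeff_in_def monom_mult mrestrict_add)
qed (use assms in \<open>simp_all add: polys_in_iff\<close>)

lemma coeff_in_polys_left:
  fixes v :: "'k::comm_ring_1 mpoly"
  assumes "v \<in> polys_in A"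
  shows "coeff_in A B e v = mconst (lookup v e)"
proof (rule klinear_on_eqI[OF _ _ _ assms])
  show "klinear_on (polys_in A) (coeff_in A B e)" unfolding coeff_in_def by (rule klinear_on_lin_ext)
  show "klinear_on (polys_in A) (\<lambda>v. mconst (lookup v e) :: 'k mpoly)"
    unfolding klinear_on_def by (simp add: lookup_add mconst_add lookup_mconst_mult mconst_mult)
  fix m :: "nat \<Rightarrow>\<^sub>0 nat" assume "keys m \<subseteq> A"
  then have "mrestrict A m = m" "mrestrict B m = 0"
    using disjoint by (auto intro: mrestrict_eq_0 mrestrict_id)
  then show "coeff_in A B e (monom m) = (mconst (lookup (monom m) e) :: 'k mpoly)"
    by (auto simp: coeff_in_def lookup_single mconst_def when_def)
qed

lemma extract_tensor_op:
  assumes a: "linop (polys_in A) a" and b: "linop (polys_in B) b"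
  shows "extract_op A B (tensor_op A B a b) x = op_smult (op_coeff a x) b"
proof
  fix g
  show "extract_op A B (tensor_op A B a b) x g = op_smult (op_coeff a x) b g"
  proof (cases "g \<in> polys_in B \<and> keys (fst x) \<subseteq> A")
    case True
    then have u: "monom (fst x) \<in> polys_in A" by (auto intro: polys_in_single)
    have "coeff_in A B (snd x) (tensor_op A B a b (monom (fst x) * g)) = mconst (op_coeff a x) * b g"
      using True linopD(1)[OF a u] linopD(1)[OF b]
      by (simp add: tensor_op_mult[OF disjoint a b u] coeff_in_mult coeff_in_polys_left op_coeff_def)
    then show ?thesis using True by (simp add: extract_op_def op_smult_def)
  next
    case False
    then consider "g \<notin> polys_in B" | "\<not> keys (fst x) \<subseteq> A" by blast
    then show ?thesis
      by cases (simp_all add: extract_op_def op_smult_def linopD(2)[OF b] op_coeff_eq_0[OF a])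
  qed
qed

lemma extract_tensor_sum:
  assumes "finite I" "\<And>i. i \<in> I \<Longrightarrow> linop (polys_in A) (fa i)" "\<And>i. i \<in> I \<Longrightarrow> linop (polys_in B) (fb i)"
  shows "extract_op A B (opsum I (\<lambda>i. tensor_op A B (fa i) (fb i))) x =
    opsum I (\<lambda>i. op_smult (op_coeff (fa i) x) (fb i))"
  using assms by (simp add: extract_op_opsum extract_tensor_op cong: opsum_cong)

text \<open>Extraction commutes with multiplication by \<open>q\<close> because \<open>q\<close> involves only the variables \<open>x\<^sub>B\<close>.\<close>
lemma extract_op_comp_mult_op:
  fixes P R R' :: "'k::comm_ring_1 op"
  assumes q: "q \<in> polys_in B" and P: "linop (polys_in (A \<union> B)) P" and R: "linop (polys_in B) R"
    and R': "linop (polys_in (A \<union> B)) R'"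
    and eq: "P \<circ> (mult_op (polys_in (A \<union> B)) q \<circ> tensor_op A B (id_op A) R) =
      mult_op (polys_in (A \<union> B)) q \<circ> R'"
  shows "extract_op A B P x \<circ> (mult_op (polys_in B) q \<circ> R) = mult_op (polys_in B) q \<circ> extract_op A B R' x"
proof
  fix g
  let ?M = "mult_op (polys_in (A \<union> B)) q" and ?MB = "mult_op (polys_in B) q"
  show "(extract_op A B P x \<circ> (?MB \<circ> R)) g = (?MB \<circ> extract_op A B R' x) g"
  proof (cases "g \<in> polys_in B \<and> keys (fst x) \<subseteq> A")
    case True
    let ?u = "monom (fst x) :: 'k mpoly"
    have u: "?u \<in> polys_in A" using True by (auto intro: polys_in_single)
    have Rg: "R g \<in> polys_in B" using True R by (simp add: linopD(1))
    have "tensor_op A B (id_op A) R (?u * g) = ?u * R g"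
      using tensor_op_mult[OF disjoint linop_id_op R u] True u by (simp add: mult_op_def)
    moreover have "?u * R g \<in> polys_in (A \<union> B)" using u Rg by (rule polys_in_mult_Un)
    ultimately have "P (?u * (q * R g)) = (?M \<circ> R') (?u * g)"
      using eq by (metis comp_apply mult_op_def mult.left_commute)
    also have "\<dots> = R' (?u * g) * q"
      using linop_in_polys[OF R'] by (simp add: mult_op_def mult.commute)
    finally have Pu: "P (?u * (q * R g)) = R' (?u * g) * q" .
    have "(extract_op A B P x \<circ> (?MB \<circ> R)) g = coeff_in A B (snd x) (P (?u * (q * R g)))"
      using True Rg q by (simp add: extract_op_def mult_op_def polys_in_mult)
    also have "\<dots> = coeff_in A B (snd x) (R' (?u * g)) * q"
      unfolding Pu by (rule coeff_in_mult[OF q])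
    also have "\<dots> = (?MB \<circ> extract_op A B R' x) g"
      using True by (simp add: extract_op_def mult_op_def mult.commute coeff_in_polys)
    finally show ?thesis .
  next
    case False
    then show ?thesis
      using linopD(2)[OF R] linop_zero[OF P] by (auto simp: extract_op_def mult_op_def coeff_in_def)
  qed
qed

end

lemma ops_independent_op_coeff:
  fixes fa :: "'i \<Rightarrow> 'k::field op"
  assumes "finite I" and lin: "\<And>i. i \<in> I \<Longrightarrow> linop (polys_in A) (fa i)" and ind: "ops_independent I fa"
  shows "fun_independent I (\<lambda>i. op_coeff (fa i))"
  unfolding fun_independent_def
proof (intro allI impI)
  fix c assume coeff: "\<forall>x. (\<Sum>i\<in>I. c i * op_coeff (fa i) x) = 0"
  let ?Q = "opsum I (\<lambda>i. op_smult (c i) (fa i))"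
  have lQ: "linop (polys_in A) ?Q" using lin by (intro linop_opsum linop_op_smult)
  have "?Q q = 0" for q
  proof (cases "q \<in> polys_in A")
    case True
    show ?thesis
    proof (rule klinear_on_eqI[OF linopD(3)[OF lQ] _ _ True])
      show "klinear_on (polys_in A) (\<lambda>_. 0 :: 'k mpoly)" unfolding klinear_on_def by simp
      fix u :: "nat \<Rightarrow>\<^sub>0 nat"
      have "lookup (?Q (monom u)) e = (\<Sum>i\<in>I. c i * op_coeff (fa i) (u, e))" for e
        by (simp add: opsum_def op_smult_def op_coeff_def lookup_sum lookup_mconst_mult)
      then show "?Q (monom u) = 0" using coeff by (intro poly_mapping_eqI) simp
    qed
  qed (simp add: linopD(2)[OF lQ])
  then show "\<forall>i\<in>I. c i = 0" using ind unfolding ops_independent_def by blast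
qed

text \<open>The weights \<open>w\<close> form a functional dual to the (independent) matrix coefficients of the \<open>fa i\<close>.\<close>
lemma right_factor_from_extractions:
  fixes fa fb :: "'i \<Rightarrow> 'k::field op"
  assumes disjoint: "A \<inter> B = {}" and fin: "finite I" and ind: "ops_independent I fa"
    and la: "\<And>i. i \<in> I \<Longrightarrow> linop (polys_in A) (fa i)" and lb: "\<And>i. i \<in> I \<Longrightarrow> linop (polys_in B) (fb i)"
    and i0: "i0 \<in> I"
  obtains w where "fb i0 = opsum (keys w)
      (\<lambda>x. op_smult (lookup w x) (extract_op A B (opsum I (\<lambda>i. tensor_op A B (fa i) (fb i))) x))"
proof -
  obtain w where w: "\<And>i. i \<in> I \<Longrightarrow> eval_comb w (op_coeff (fa i)) = (if i = i0 then 1 else 0)"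
    using fun_independent_dual[OF fin ops_independent_op_coeff[OF fin la ind]] i0 by blast
  have "opsum (keys w) (\<lambda>x. op_smult (lookup w x) (opsum I (\<lambda>i. op_smult (op_coeff (fa i) x) (fb i)))) q
      = fb i0 q" for q
  proof -
    have "opsum (keys w) (\<lambda>x. op_smult (lookup w x) (opsum I (\<lambda>i. op_smult (op_coeff (fa i) x) (fb i)))) q
        = (\<Sum>i\<in>I. mconst (eval_comb w (op_coeff (fa i))) * fb i q)"
      unfolding opsum_def op_smult_def eval_comb_def
      by (simp add: sum_distrib_left mconst_sum sum_distrib_right mconst_mult mult.assoc sum.swap[of _ I])
    also have "\<dots> = (\<Sum>i\<in>I. if i = i0 then fb i q else 0)" by (intro sum.cong) (auto simp: w)
    also have "\<dots> = fb i0 q" using fin i0 by simp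
    finally show ?thesis .
  qed
  then have "fb i0 = opsum (keys w)
      (\<lambda>x. op_smult (lookup w x) (extract_op A B (opsum I (\<lambda>i. tensor_op A B (fa i) (fb i))) x))"
    by (simp add: extract_tensor_sum[OF disjoint fin la lb] fun_eq_iff)
  then show ?thesis by (rule that)
qed

lemma tensor_map_kernel:
  fixes X Y :: "'k::field op set"
  assumes disjoint: "A \<inter> B = {}" and X: "op_subspace X" "\<And>a. a \<in> X \<Longrightarrow> linop (polys_in A) a"
    and Y: "op_subspace Y" "\<And>b. b \<in> Y \<Longrightarrow> linop (polys_in B) b"
    and \<phi>: "\<phi> \<in> tfree X Y"
  shows "tensor_map A B \<phi> = (\<lambda>_. 0) \<longleftrightarrow> \<phi> \<in> trel X Y"
proof
  assume \<Psi>: "tensor_map A B \<phi> = (\<lambda>_. 0)"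
  obtain I' fb where I': "I' \<subseteq> keys \<phi>" "\<forall>i\<in>I'. fb i \<in> Y" "ops_independent I' fst"
    and rel: "\<phi> - (\<Sum>i\<in>I'. tgen (fst i) (fb i)) \<in> trel X Y"
    using tfree_reduce_independent[OF X(1) Y(1) \<phi>] by blast
  have fin: "finite I'" using I'(1) finite_keys by (rule finite_subset)
  have X': "fst i \<in> X" if "i \<in> I'" for i using tfree_keys[OF \<phi>] I'(1) that by blast
  have la: "linop (polys_in A) (fst i)" if "i \<in> I'" for i using X(2) X' that by blast
  have lb: "linop (polys_in B) (fb i)" if "i \<in> I'" for i using Y(2) I'(2) that by blast
  have zero: "opsum I' (\<lambda>i. tensor_op A B (fst i) (fb i)) = (\<lambda>_. 0)"
    using \<Psi> tensor_map_eq_if_trel[OF rel] by (simp add: tensor_map_sum tensor_map_tgen)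
  have "fb i0 = (\<lambda>_. 0)" if i0: "i0 \<in> I'" for i0
  proof -
    obtain w where "fb i0 = opsum (keys w) (\<lambda>x. op_smult (lookup w x)
        (extract_op A B (opsum I' (\<lambda>i. tensor_op A B (fst i) (fb i))) x))"
      by (rule right_factor_from_extractions[of A B I' fst fb i0, OF disjoint fin I'(3) la lb i0])
    with zero show ?thesis
      by (simp add: extract_op_zero opsum_def op_smult_def)
  qed
  then have "(\<Sum>i\<in>I'. tgen (fst i) (fb i)) \<in> trel X Y"
    using X' by (auto intro!: trel_sum tgen_zero_right[OF X(1) Y(1)])
  from trel.sum[OF rel this] show "\<phi> \<in> trel X Y" by simp
qed (rule tensor_map_trel)

section \<open>Operators tangent to a hypersurface\<close>

definition mult_ideal :: "nat set \<Rightarrow> 'k::comm_ring_1 mpoly \<Rightarrow> 'k op set" where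
  "mult_ideal I q = (\<lambda>R. mult_op (polys_in I) q \<circ> R) ` diff_ops (polys_in I)"

lemma tangent_ops_iff:
  "P \<in> tangent_ops (polys_in I) Q \<longleftrightarrow>
    P \<in> diff_ops (polys_in I) \<and> (\<forall>m\<ge>1. \<forall>X\<in>mult_ideal I (Q ^ m). P \<circ> X \<in> mult_ideal I (Q ^ m))"
  unfolding tangent_ops_def mult_ideal_def by (auto simp: comp_assoc)

lemma tangent_opsD:
  assumes "P \<in> tangent_ops (polys_in I) Q"
  shows "P \<in> diff_ops (polys_in I)" and "m \<ge> 1 \<Longrightarrow> X \<in> mult_ideal I (Q ^ m) \<Longrightarrow> P \<circ> X \<in> mult_ideal I (Q ^ m)"
  using assms unfolding tangent_ops_iff by blast+

lemma mult_op_comp_in_mult_ideal: "R \<in> diff_ops (polys_in I) \<Longrightarrow> mult_op (polys_in I) q \<circ> R \<in> mult_ideal I q"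
  unfolding mult_ideal_def by blast

lemma op_subspace_mult_ideal:
  assumes q: "q \<in> polys_in I"
  shows "op_subspace (mult_ideal I q)"
  unfolding op_subspace_def
proof (intro conjI ballI allI)
  have "(\<lambda>_. 0) = mult_op (polys_in I) q \<circ> (\<lambda>_. 0)" by (simp add: mult_op_def fun_eq_iff)
  then show "(\<lambda>_. 0) \<in> mult_ideal I q" using mult_op_comp_in_mult_ideal[OF diff_ops_zero] by metis
next
  fix X Y assume "X \<in> mult_ideal I q" "Y \<in> mult_ideal I q"
  then obtain R1 R2 where R: "R1 \<in> diff_ops (polys_in I)" "R2 \<in> diff_ops (polys_in I)"
    and XY: "X = mult_op (polys_in I) q \<circ> R1" "Y = mult_op (polys_in I) q \<circ> R2"
    unfolding mult_ideal_def by blast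
  have "op_add X Y = mult_op (polys_in I) q \<circ> op_add R1 R2"
    using linop_in_polys[OF linop_diff_ops[OF R(1)]] linop_in_polys[OF linop_diff_ops[OF R(2)]]
    by (simp add: XY op_add_def mult_op_def fun_eq_iff distrib_left polys_in_add)
  then show "op_add X Y \<in> mult_ideal I q" using R by (simp add: mult_op_comp_in_mult_ideal diff_ops.add)
next
  fix c X assume "X \<in> mult_ideal I q"
  then obtain R where R: "R \<in> diff_ops (polys_in I)" and X: "X = mult_op (polys_in I) q \<circ> R"
    unfolding mult_ideal_def by blast
  have "op_smult c X = mult_op (polys_in I) q \<circ> op_smult c R"
    using linop_in_polys[OF linop_diff_ops[OF R]]
    by (simp add: X op_smult_def mult_op_def fun_eq_iff mult.left_commute polys_in_mconst_mult)
  then show "op_smult c X \<in> mult_ideal I q" using R by (simp add: mult_op_comp_in_mult_ideal diff_ops.smult)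
qed

lemma mult_ideal_scale_subset:
  "mult_ideal I (mconst c * q) \<subseteq> mult_ideal I q"
proof
  fix X assume "X \<in> mult_ideal I (mconst c * q)"
  then obtain R where R: "R \<in> diff_ops (polys_in I)" and X: "X = mult_op (polys_in I) (mconst c * q) \<circ> R"
    unfolding mult_ideal_def by blast
  have "X = mult_op (polys_in I) q \<circ> op_smult c R"
    using linop_in_polys[OF linop_diff_ops[OF R]]
    by (simp add: X op_smult_def mult_op_def fun_eq_iff ac_simps polys_in_mconst_mult)
  then show "X \<in> mult_ideal I q" using R by (simp add: mult_op_comp_in_mult_ideal diff_ops.smult)
qed

lemma mult_ideal_scale:
  assumes "(c :: 'k::field) \<noteq> 0"
  shows "mult_ideal I (mconst c * q) = mult_ideal I q"
proof
  have "q = mconst (inverse c) * (mconst c * q)"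
    using assms by (simp add: mult.assoc[symmetric] mconst_mult[symmetric])
  then show "mult_ideal I q \<subseteq> mult_ideal I (mconst c * q)"
    by (metis mult_ideal_scale_subset)
qed (rule mult_ideal_scale_subset)

lemma tangent_ops_scale:
  assumes "(c :: 'k::field) \<noteq> 0"
  shows "tangent_ops (polys_in I) (mconst c * Q) = tangent_ops (polys_in I) Q"
proof -
  have eq: "mult_ideal I ((mconst c * Q) ^ m) = mult_ideal I (Q ^ m)" for m
    using mult_ideal_scale[of "c ^ m" I "Q ^ m"] assms by (simp add: power_mult_distrib mconst_power)
  show ?thesis by (simp add: set_eq_iff tangent_ops_iff eq)
qed

lemma op_subspace_tangent_ops:
  assumes "Q \<in> polys_in I"
  shows "op_subspace (tangent_ops (polys_in I) Q)"
proof -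
  have ideal: "op_subspace (mult_ideal I (Q ^ m))" for m by (intro op_subspace_mult_ideal polys_in_power assms)
  show ?thesis
    unfolding op_subspace_def
  proof (intro conjI ballI allI)
    show "(\<lambda>_. 0) \<in> tangent_ops (polys_in I) Q"
      unfolding tangent_ops_iff using op_subspaceD(1)[OF ideal] by (simp add: comp_def diff_ops_zero)
  next
    fix P1 P2 assume P: "P1 \<in> tangent_ops (polys_in I) Q" "P2 \<in> tangent_ops (polys_in I) Q"
    have "op_add P1 P2 \<circ> X = op_add (P1 \<circ> X) (P2 \<circ> X)" for X by (simp add: fun_eq_iff op_add_def)
    then show "op_add P1 P2 \<in> tangent_ops (polys_in I) Q"
      using P unfolding tangent_ops_iff by (auto intro: diff_ops.add op_subspaceD(2)[OF ideal])
  next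
    fix c P assume P: "P \<in> tangent_ops (polys_in I) Q"
    have "op_smult c P \<circ> X = op_smult c (P \<circ> X)" for X by (simp add: fun_eq_iff op_smult_def)
    then show "op_smult c P \<in> tangent_ops (polys_in I) Q"
      using P unfolding tangent_ops_iff by (auto intro: diff_ops.smult op_subspaceD(3)[OF ideal])
  qed
qed

context
  fixes A B :: "nat set" and Q :: "'k::field mpoly"
  assumes disjoint: "A \<inter> B = {}" and fin: "finite A" "finite B" and Q: "Q \<in> polys_in B"
begin

lemma mult_op_Un_eq_tensor_op:
  assumes "q \<in> polys_in B"
  shows "mult_op (polys_in (A \<union> B)) q = tensor_op A B (id_op A) (mult_op (polys_in B) q)"
  using tensor_op_mult_op[OF disjoint polys_in_1 assms] by simp

lemma tensor_op_comp_mult_ideal: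
  assumes a: "a \<in> diff_ops (polys_in A)" "a' \<in> diff_ops (polys_in A)"
    and b: "b \<in> tangent_ops (polys_in B) Q" and b': "b' \<in> diff_ops (polys_in B)" and m: "m \<ge> 1"
  shows "tensor_op A B a b \<circ> mult_op (polys_in (A \<union> B)) (Q ^ m) \<circ> tensor_op A B a' b'
    \<in> mult_ideal (A \<union> B) (Q ^ m)"
proof -
  let ?MB = "mult_op (polys_in B) (Q ^ m)"
  have Qm: "Q ^ m \<in> polys_in B" using Q by (rule polys_in_power)
  have lin: "linop (polys_in A) a" "linop (polys_in A) a'" "linop (polys_in B) b" "linop (polys_in B) b'"
    "linop (polys_in B) ?MB"
    using a b' tangent_opsD(1)[OF b] by (auto intro: linop_diff_ops linop_mult_op Qm)
  obtain b'' where b'': "b'' \<in> diff_ops (polys_in B)" "b \<circ> ?MB \<circ> b' = ?MB \<circ> b''"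
    using tangent_opsD(2)[OF b m mult_op_comp_in_mult_ideal[OF b']] unfolding mult_ideal_def
    by (auto simp: comp_assoc)
  have "tensor_op A B a b \<circ> mult_op (polys_in (A \<union> B)) (Q ^ m) \<circ> tensor_op A B a' b' =
      tensor_op A B (a \<circ> a') (b \<circ> ?MB \<circ> b')"
    using lin by (simp add: mult_op_Un_eq_tensor_op[OF Qm] tensor_op_comp[OF disjoint]
        linop_comp linop_id_op comp_id_op_right)
  also have "\<dots> = mult_op (polys_in (A \<union> B)) (Q ^ m) \<circ> tensor_op A B (a \<circ> a') b''"
    using lin linop_diff_ops[OF b''(1)]
    by (simp add: b''(2) mult_op_Un_eq_tensor_op[OF Qm] tensor_op_comp[OF disjoint]
        linop_comp linop_id_op comp_id_op_left)
  also have "\<dots> \<in> mult_ideal (A \<union> B) (Q ^ m)"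
    using a b'' by (intro mult_op_comp_in_mult_ideal tensor_op_diff_ops[OF disjoint] diff_ops.comp)
  finally show ?thesis .
qed

lemma tensor_op_tangent:
  assumes a: "a \<in> diff_ops (polys_in A)" and b: "b \<in> tangent_ops (polys_in B) Q"
  shows "tensor_op A B a b \<in> tangent_ops (polys_in (A \<union> B)) Q"
  unfolding tangent_ops_iff
proof (intro conjI allI impI ballI)
  show "tensor_op A B a b \<in> diff_ops (polys_in (A \<union> B))"
    using a tangent_opsD(1)[OF b] by (rule tensor_op_diff_ops[OF disjoint])
  fix m :: nat and X assume m: "m \<ge> 1" and "X \<in> mult_ideal (A \<union> B) (Q ^ m)"
  then obtain R where R: "R \<in> diff_ops (polys_in (A \<union> B))" and X: "X = mult_op (polys_in (A \<union> B)) (Q ^ m) \<circ> R"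
    unfolding mult_ideal_def by blast
  let ?L = "tensor_op A B a b \<circ> mult_op (polys_in (A \<union> B)) (Q ^ m)"
  have L: "linop (polys_in (A \<union> B)) ?L"
    using a tangent_opsD(1)[OF b] Q
    by (intro linop_comp linop_tensor_op linop_mult_op linop_diff_ops polys_in_power polys_in_Un2)
  obtain \<rho> where \<rho>: "\<rho> \<in> tfree (diff_ops (polys_in A)) (diff_ops (polys_in B))"
    and R_eq: "R = opsum (keys \<rho>) (\<lambda>y. op_smult (lookup \<rho> y) (tensor_op A B (fst y) (snd y)))"
    using R tensor_range_eq_diff_ops[OF disjoint fin] tensor_range_expansion[OF disjoint] by blast
  have lin_y: "linop (polys_in (A \<union> B)) (tensor_op A B (fst y) (snd y))" if "y \<in> keys \<rho>" for y
    using tfree_keys[OF \<rho> that] by (auto intro: linop_tensor_op linop_diff_ops)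
  have "?L \<circ> R = opsum (keys \<rho>) (\<lambda>y. ?L \<circ> op_smult (lookup \<rho> y) (tensor_op A B (fst y) (snd y)))"
    unfolding R_eq
    by (rule opsum_comp_left[OF L finite_keys]) (auto intro: linop_in_polys linop_op_smult lin_y)
  also have "\<dots> = opsum (keys \<rho>) (\<lambda>y. op_smult (lookup \<rho> y) (?L \<circ> tensor_op A B (fst y) (snd y)))"
    by (intro opsum_cong op_smult_comp_left[OF L linop_in_polys[OF lin_y]])
  also have "\<dots> \<in> mult_ideal (A \<union> B) (Q ^ m)"
    using tfree_keys[OF \<rho>] a b m Q
    by (intro op_subspace_opsum op_subspaceD(3) op_subspace_mult_ideal polys_in_power polys_in_Un2
        tensor_op_comp_mult_ideal) auto
  finally show "tensor_op A B a b \<circ> X \<in> mult_ideal (A \<union> B) (Q ^ m)"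
    by (simp add: X comp_assoc)
qed

lemma extract_op_diff_ops:
  assumes "P \<in> diff_ops (polys_in (A \<union> B))"
  shows "extract_op A B P x \<in> diff_ops (polys_in B)"
proof -
  obtain \<phi> where \<phi>: "\<phi> \<in> tfree (diff_ops (polys_in A)) (diff_ops (polys_in B))"
    and P: "P = opsum (keys \<phi>) (\<lambda>y. op_smult (lookup \<phi> y) (tensor_op A B (fst y) (snd y)))"
    using assms tensor_range_eq_diff_ops[OF disjoint fin] tensor_range_expansion[OF disjoint] by blast
  have "extract_op A B P x =
      opsum (keys \<phi>) (\<lambda>y. op_smult (lookup \<phi> y) (op_smult (op_coeff (fst y) x) (snd y)))"
    using tfree_keys[OF \<phi>] unfolding P extract_op_opsum extract_op_smult
    by (intro opsum_cong) (simp add: extract_tensor_op[OF disjoint] linop_diff_ops)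
  also have "\<dots> \<in> diff_ops (polys_in B)"
    using tfree_keys[OF \<phi>] by (intro diff_ops_opsum diff_ops.smult) auto
  finally show ?thesis .
qed

lemma extract_op_tangent:
  assumes P: "P \<in> tangent_ops (polys_in (A \<union> B)) Q"
  shows "extract_op A B P x \<in> tangent_ops (polys_in B) Q"
  unfolding tangent_ops_iff
proof (intro conjI allI impI ballI)
  have PD: "P \<in> diff_ops (polys_in (A \<union> B))" by (rule tangent_opsD(1)[OF P])
  show "extract_op A B P x \<in> diff_ops (polys_in B)" by (rule extract_op_diff_ops[OF PD])
  fix m :: nat and X assume m: "m \<ge> 1" and "X \<in> mult_ideal B (Q ^ m)"
  then obtain R where R: "R \<in> diff_ops (polys_in B)" and X: "X = mult_op (polys_in B) (Q ^ m) \<circ> R"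
    unfolding mult_ideal_def by blast
  let ?M = "mult_op (polys_in (A \<union> B)) (Q ^ m)"
  have "tensor_op A B (id_op A) R \<in> diff_ops (polys_in (A \<union> B))"
    using R by (intro tensor_op_diff_ops[OF disjoint] diff_ops.mult polys_in_1)
  then obtain R' where R': "R' \<in> diff_ops (polys_in (A \<union> B))" "P \<circ> (?M \<circ> tensor_op A B (id_op A) R) = ?M \<circ> R'"
    using tangent_opsD(2)[OF P m mult_op_comp_in_mult_ideal] unfolding mult_ideal_def by blast
  have "extract_op A B P x \<circ> X = mult_op (polys_in B) (Q ^ m) \<circ> extract_op A B R' x"
    unfolding X using Q R R' PD
    by (intro extract_op_comp_mult_op[OF disjoint] polys_in_power linop_diff_ops)
  then show "extract_op A B P x \<circ> X \<in> mult_ideal B (Q ^ m)"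
    using mult_op_comp_in_mult_ideal[OF extract_op_diff_ops[OF R'(1)]] by simp
qed

lemma tangent_right_factor:
  assumes P: "opsum I (\<lambda>i. tensor_op A B (fa i) (fb i)) \<in> tangent_ops (polys_in (A \<union> B)) Q"
    and "finite I" "ops_independent I fa"
    and "\<And>i. i \<in> I \<Longrightarrow> linop (polys_in A) (fa i)" "\<And>i. i \<in> I \<Longrightarrow> linop (polys_in B) (fb i)"
    and "i0 \<in> I"
  shows "fb i0 \<in> tangent_ops (polys_in B) Q"
proof -
  obtain w where "fb i0 = opsum (keys w)
      (\<lambda>x. op_smult (lookup w x) (extract_op A B (opsum I (\<lambda>i. tensor_op A B (fa i) (fb i))) x))"
    by (rule right_factor_from_extractions[of A B I fa fb i0, OF disjoint assms(2-6)])
  also have "\<dots> \<in> tangent_ops (polys_in B) Q"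
    by (intro op_subspace_opsum op_subspaceD(3) op_subspace_tangent_ops Q extract_op_tangent P)
  finally show ?thesis .
qed

lemma tensor_map_image_tangent_ops:
  "tensor_map A B ` tfree (diff_ops (polys_in A)) (tangent_ops (polys_in B) Q) =
    tangent_ops (polys_in (A \<union> B)) Q"
proof
  have S: "op_subspace (tangent_ops (polys_in (A \<union> B)) Q)"
    using Q by (intro op_subspace_tangent_ops polys_in_Un2)
  show "tensor_map A B ` tfree (diff_ops (polys_in A)) (tangent_ops (polys_in B) Q) \<subseteq>
      tangent_ops (polys_in (A \<union> B)) Q"
    unfolding tensor_map_def
    by (auto intro!: op_subspace_opsum[OF S] op_subspaceD(3)[OF S] tensor_op_tangent dest: tfree_keys)
next
  show "tangent_ops (polys_in (A \<union> B)) Q \<subseteq>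
      tensor_map A B ` tfree (diff_ops (polys_in A)) (tangent_ops (polys_in B) Q)"
  proof
    fix P assume P: "P \<in> tangent_ops (polys_in (A \<union> B)) Q"
    obtain \<phi> where \<phi>: "\<phi> \<in> tfree (diff_ops (polys_in A)) (diff_ops (polys_in B))"
      and P_eq: "P = tensor_map A B \<phi>"
      using tangent_opsD(1)[OF P] tensor_range_eq_diff_ops[OF disjoint fin] by blast
    obtain I' fb where I': "I' \<subseteq> keys \<phi>" "\<forall>i\<in>I'. fb i \<in> diff_ops (polys_in B)" "ops_independent I' fst"
      and rel: "\<phi> - (\<Sum>i\<in>I'. tgen (fst i) (fb i)) \<in> trel (diff_ops (polys_in A)) (diff_ops (polys_in B))"
      using tfree_reduce_independent[OF op_subspace_diff_ops op_subspace_diff_ops \<phi>] by blast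
    have finI: "finite I'" using I'(1) finite_keys by (rule finite_subset)
    have fstA: "fst i \<in> diff_ops (polys_in A)" if "i \<in> I'" for i using tfree_keys[OF \<phi>] I'(1) that by blast
    have la: "linop (polys_in A) (fst i)" if "i \<in> I'" for i using fstA[OF that] by (rule linop_diff_ops)
    have lb: "linop (polys_in B) (fb i)" if "i \<in> I'" for i using I'(2) that by (blast intro: linop_diff_ops)
    have P_sum: "P = opsum I' (\<lambda>i. tensor_op A B (fst i) (fb i))"
      using tensor_map_eq_if_trel[OF rel] by (simp add: P_eq tensor_map_sum tensor_map_tgen)
    have "fb i0 \<in> tangent_ops (polys_in B) Q" if "i0 \<in> I'" for i0
      using tangent_right_factor[OF P[unfolded P_sum] finI I'(3) la lb that] .
    then have "(\<Sum>i\<in>I'. tgen (fst i) (fb i)) \<in> tfree (diff_ops (polys_in A)) (tangent_ops (polys_in B) Q)"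
      using fstA by (intro tfree_sum tfree_tgen)
    moreover have "P = tensor_map A B (\<Sum>i\<in>I'. tgen (fst i) (fb i))"
      by (simp add: P_sum tensor_map_sum tensor_map_tgen)
    ultimately show "P \<in> tensor_map A B ` tfree (diff_ops (polys_in A)) (tangent_ops (polys_in B) Q)" by blast
  qed
qed

theorem alg_iso_tensor_tangent_ops:
  "alg_iso_tensor (diff_ops (polys_in A)) (id_op A) (tangent_ops (polys_in B) Q) (id_op B)
     (tangent_ops (polys_in (A \<union> B)) Q) (id_op (A \<union> B))"
  unfolding alg_iso_tensor_def
proof (intro exI[of _ "tensor_map A B"] conjI ballI allI)
  have linA: "linop (polys_in A) a" if "a \<in> diff_ops (polys_in A)" for a :: "'k op"
    using that by (rule linop_diff_ops)
  have linB: "linop (polys_in B) b" if "b \<in> tangent_ops (polys_in B) Q" for b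
    using tangent_opsD(1)[OF that] by (rule linop_diff_ops)
  show "tensor_map A B ` tfree (diff_ops (polys_in A)) (tangent_ops (polys_in B) Q) =
      tangent_ops (polys_in (A \<union> B)) Q"
    by (rule tensor_map_image_tangent_ops)
  show "tensor_map A B (\<phi> + \<psi>) = op_add (tensor_map A B \<phi>) (tensor_map A B \<psi>)" for \<phi> \<psi>
    by (rule tensor_map_add)
  show "tensor_map A B (tsmult c \<phi>) = op_smult c (tensor_map A B \<phi>)" for c \<phi>
    by (rule tensor_map_tsmult)
  show "tensor_map A B \<phi> = (\<lambda>_. 0) \<longleftrightarrow> \<phi> \<in> trel (diff_ops (polys_in A)) (tangent_ops (polys_in B) Q)"
    if "\<phi> \<in> tfree (diff_ops (polys_in A)) (tangent_ops (polys_in B) Q)" for \<phi>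
    using tensor_map_kernel[OF disjoint op_subspace_diff_ops linA op_subspace_tangent_ops[OF Q] linB that] .
  show "tensor_map A B (tgen (a \<circ> a') (b \<circ> b')) = tensor_map A B (tgen a b) \<circ> tensor_map A B (tgen a' b')"
    if "a \<in> diff_ops (polys_in A)" "a' \<in> diff_ops (polys_in A)"
      "b \<in> tangent_ops (polys_in B) Q" "b' \<in> tangent_ops (polys_in B) Q" for a a' b b'
    using that by (simp add: tensor_map_tgen tensor_op_comp[OF disjoint] linA linB)
  show "tensor_map A B (tgen (id_op A) (id_op B)) = id_op (A \<union> B)"
    using tensor_op_mult_op[OF disjoint polys_in_1 polys_in_1] by (simp add: tensor_map_tgen)
qed

end

section \<open>Substitution homomorphisms and conjugation\<close>

definition subst_monom :: "(nat \<Rightarrow> 'k::comm_ring_1 mpoly) \<Rightarrow> (nat \<Rightarrow>\<^sub>0 nat) \<Rightarrow> 'k mpoly" where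
  "subst_monom f m = (\<Prod>i\<in>keys m. f i ^ lookup m i)"

definition subst :: "(nat \<Rightarrow> 'k::comm_ring_1 mpoly) \<Rightarrow> 'k mpoly \<Rightarrow> 'k mpoly" where
  "subst f = lin_ext (subst_monom f)"

lemma subst_monom_mono_neutral:
  "finite K \<Longrightarrow> keys m \<subseteq> K \<Longrightarrow> subst_monom f m = (\<Prod>i\<in>K. f i ^ lookup m i)"
  unfolding subst_monom_def by (rule prod.mono_neutral_left) (auto simp: in_keys_iff)

lemma subst_monom_add: "subst_monom f (m + m') = subst_monom f m * subst_monom f m'"
proof -
  let ?K = "keys m \<union> keys m'"
  have "subst_monom f (m + m') = (\<Prod>i\<in>?K. f i ^ lookup (m + m') i)"
    by (rule subst_monom_mono_neutral) (auto simp: keys_add_nat)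
  also have "\<dots> = subst_monom f m * subst_monom f m'"
    using subst_monom_mono_neutral[of ?K m f] subst_monom_mono_neutral[of ?K m' f]
    by (simp add: lookup_add power_add prod.distrib)
  finally show ?thesis .
qed

lemma subst_add: "subst f (p + q) = subst f p + subst f q"
  unfolding subst_def by (rule lin_ext_add)

lemma subst_smult: "subst f (mconst c * p) = mconst c * subst f p"
  unfolding subst_def by (rule lin_ext_smult)

lemma subst_diff: "subst f (p - q) = subst f p - subst f q"
  using subst_add[of f p "- q"] subst_smult[of f "-1" q] by (simp add: mconst_uminus)

lemma subst_one [simp]: "subst f 1 = 1"
  using lin_ext_monom[of "subst_monom f" 0] by (simp add: subst_def subst_monom_def)

lemma subst_mvar: "subst f (mvar i) = f i"
  by (simp add: subst_def mvar_eq_monom subst_monom_def)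

lemma subst_mult: "subst f (p * q) = subst f p * subst f q"
proof (rule klinear_on_eqI2[where F="\<lambda>p q. subst f (p * q)" and G="\<lambda>p q. subst f p * subst f q"
    and I=UNIV and J=UNIV])
  have lin: "klinear_on S (subst f)" for S unfolding subst_def by (rule klinear_on_lin_ext)
  fix p q :: "'a mpoly"
  show "klinear_on (polys_in UNIV) (\<lambda>p. subst f (p * q))"
    by (rule klinear_on_comp[OF klinear_on_mult_right lin[of UNIV], unfolded comp_def]) simp
  show "klinear_on (polys_in UNIV) (\<lambda>q. subst f (p * q))"
    by (rule klinear_on_comp[OF klinear_on_mult_left lin[of UNIV], unfolded comp_def]) simp
  show "klinear_on (polys_in UNIV) (\<lambda>p. subst f p * subst f q)"
    by (rule klinear_on_mult_right_comp[OF lin])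
  show "klinear_on (polys_in UNIV) (\<lambda>q. subst f p * subst f q)"
    by (rule klinear_on_mult_left_comp[OF lin])
qed (simp_all add: subst_def monom_mult subst_monom_add polys_in_iff)

lemma subst_prod: "subst f (\<Prod>x\<in>K. g x) = (\<Prod>x\<in>K. subst f (g x))"
  by (induct K rule: infinite_finite_induct) (simp_all add: subst_mult)

lemma subst_in_polys:
  assumes "\<And>i. i \<in> I \<Longrightarrow> f i \<in> polys_in J" "p \<in> polys_in I"
  shows "subst f p \<in> polys_in J"
  unfolding subst_def
proof (rule lin_ext_in_polys)
  fix m assume "m \<in> keys p"
  then have "keys m \<subseteq> I" using assms(2) by (simp add: polys_in_iff)
  then show "subst_monom f m \<in> polys_in J" unfolding subst_monom_def using assms(1) by blast
qed

lemma ring_hom_eqI: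
  fixes F G :: "'k::comm_ring_1 mpoly \<Rightarrow> 'k mpoly"
  assumes lin: "klinear_on (polys_in I) F" "klinear_on (polys_in I) G"
    and mult: "\<And>p q. F (p * q) = F p * F q" "\<And>p q. G (p * q) = G p * G q"
    and one: "F 1 = G 1" and var: "\<And>i. i \<in> I \<Longrightarrow> F (mvar i) = G (mvar i)"
    and p: "p \<in> polys_in I"
  shows "F p = G p"
proof (rule klinear_on_eqI[OF lin _ p])
  fix m :: "nat \<Rightarrow>\<^sub>0 nat" assume "keys m \<subseteq> I"
  then show "F (monom m) = G (monom m)"
    by (induct rule: monomial_induct) (simp_all add: one mult var)
qed

locale mpoly_involution =
  fixes I :: "nat set" and \<sigma> :: "'k::comm_ring_1 mpoly \<Rightarrow> 'k mpoly"
  assumes polys_closed: "p \<in> polys_in I \<Longrightarrow> \<sigma> p \<in> polys_in I"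
    and involutive: "p \<in> polys_in I \<Longrightarrow> \<sigma> (\<sigma> p) = p"
    and add: "\<sigma> (p + q) = \<sigma> p + \<sigma> q"
    and mult: "\<sigma> (p * q) = \<sigma> p * \<sigma> q"
    and smult: "\<sigma> (mconst c * p) = mconst c * \<sigma> p"
    and one: "\<sigma> 1 = 1"
begin

definition \<sigma>_op :: "'k op" where
  "\<sigma>_op q = (if q \<in> polys_in I then \<sigma> q else 0)"

definition conjugate :: "'k op \<Rightarrow> 'k op" where
  "conjugate P = \<sigma>_op \<circ> P \<circ> \<sigma>_op"

lemma zero: "\<sigma> 0 = 0"
  using smult[of 0 0] by simp

lemma power: "\<sigma> (p ^ k) = \<sigma> p ^ k"
  by (induct k) (simp_all add: one mult)

lemma linop_\<sigma>_op: "linop (polys_in I) \<sigma>_op"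
  unfolding linop_def klinear_on_def \<sigma>_op_def by (auto simp: polys_closed add smult)

lemma \<sigma>_op_\<sigma>_op: "q \<in> polys_in I \<Longrightarrow> \<sigma>_op (\<sigma>_op q) = q"
  unfolding \<sigma>_op_def by (simp add: polys_closed involutive)

lemma linop_conjugate: "linop (polys_in I) P \<Longrightarrow> linop (polys_in I) (conjugate P)"
  unfolding conjugate_def by (intro linop_comp linop_\<sigma>_op)

lemma conjugate_conjugate: "linop (polys_in I) P \<Longrightarrow> conjugate (conjugate P) = P"
  unfolding conjugate_def fun_eq_iff comp_def
  by (metis \<sigma>_op_\<sigma>_op linop_in_polys linop_\<sigma>_op linopD(2) linop_zero)

lemma conjugate_zero: "conjugate (\<lambda>_. 0) = (\<lambda>_. 0)"
  unfolding conjugate_def by (simp add: fun_eq_iff linop_zero[OF linop_\<sigma>_op])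

lemma conjugate_add:
  "linop (polys_in I) P \<Longrightarrow> linop (polys_in I) R \<Longrightarrow> conjugate (op_add P R) = op_add (conjugate P) (conjugate R)"
  unfolding conjugate_def op_add_def fun_eq_iff comp_def
  by (simp add: linop_add[OF linop_\<sigma>_op] linop_in_polys)

lemma conjugate_smult: "linop (polys_in I) P \<Longrightarrow> conjugate (op_smult c P) = op_smult c (conjugate P)"
  unfolding conjugate_def op_smult_def fun_eq_iff comp_def
  by (simp add: linop_smult[OF linop_\<sigma>_op] linop_in_polys)

lemma conjugate_comp: "linop (polys_in I) R \<Longrightarrow> conjugate (P \<circ> R) = conjugate P \<circ> conjugate R"
  unfolding conjugate_def fun_eq_iff comp_def by (simp add: \<sigma>_op_\<sigma>_op linop_in_polys)

lemma conjugate_mult_op: "p \<in> polys_in I \<Longrightarrow> conjugate (mult_op (polys_in I) p) = mult_op (polys_in I) (\<sigma> p)"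
  unfolding conjugate_def fun_eq_iff comp_def mult_op_def \<sigma>_op_def
  by (simp add: polys_closed involutive mult polys_in_mult zero)

lemma conjugate_derivation:
  assumes \<theta>: "\<theta> \<in> derivations (polys_in I)"
  shows "conjugate \<theta> \<in> derivations (polys_in I)"
  unfolding derivations_iff
proof (intro conjI ballI)
  show "linop (polys_in I) (conjugate \<theta>)" by (rule linop_conjugate[OF derivationsD(1)[OF \<theta>]])
  fix p q :: "'k mpoly" assume "p \<in> polys_in I" "q \<in> polys_in I"
  then show "conjugate \<theta> (p * q) = p * conjugate \<theta> q + q * conjugate \<theta> p"
    using derivationsD[OF \<theta>] linop_in_polys[OF derivationsD(1)[OF \<theta>]]
    by (simp add: conjugate_def \<sigma>_op_def polys_closed involutive mult add polys_in_mult polys_in_add)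
qed

lemma conjugate_diff_ops: "P \<in> diff_ops (polys_in I) \<Longrightarrow> conjugate P \<in> diff_ops (polys_in I)"
proof (induct rule: diff_ops.induct)
  case (der \<theta>) then show ?case by (intro diff_ops.der conjugate_derivation)
next
  case (mult p) then show ?case by (simp add: conjugate_mult_op polys_closed diff_ops.mult)
next
  case (add P R) then show ?case by (simp add: conjugate_add linop_diff_ops diff_ops.add)
next
  case (smult P c) then show ?case by (simp add: conjugate_smult linop_diff_ops diff_ops.smult)
next
  case (comp P R) then show ?case using conjugate_comp[OF linop_diff_ops[OF comp(3)]] diff_ops.comp
    by (metis comp_def)
qed

lemma conjugate_mult_ideal:
  assumes "q \<in> polys_in I" "X \<in> mult_ideal I q"
  shows "conjugate X \<in> mult_ideal I (\<sigma> q)"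
proof -
  obtain R where R: "R \<in> diff_ops (polys_in I)" and X: "X = mult_op (polys_in I) q \<circ> R"
    using assms(2) unfolding mult_ideal_def by blast
  have "conjugate X = mult_op (polys_in I) (\<sigma> q) \<circ> conjugate R"
    unfolding X by (simp add: conjugate_comp linop_diff_ops[OF R] conjugate_mult_op assms(1))
  then show ?thesis using R by (simp add: mult_op_comp_in_mult_ideal conjugate_diff_ops)
qed

lemma conjugate_tangent:
  assumes Q: "Q \<in> polys_in I" and P: "P \<in> tangent_ops (polys_in I) Q"
  shows "conjugate P \<in> tangent_ops (polys_in I) (\<sigma> Q)"
  unfolding tangent_ops_iff
proof (intro conjI allI impI ballI)
  show "conjugate P \<in> diff_ops (polys_in I)" by (rule conjugate_diff_ops[OF tangent_opsD(1)[OF P]])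
  fix m :: nat and X assume m: "m \<ge> 1" and X: "X \<in> mult_ideal I (\<sigma> Q ^ m)"
  have Qm: "Q ^ m \<in> polys_in I" "\<sigma> Q ^ m \<in> polys_in I" using Q by (auto intro: polys_in_power polys_closed)
  have linX: "linop (polys_in I) X"
    using X unfolding mult_ideal_def by (auto intro: linop_comp linop_mult_op linop_diff_ops Qm)
  have "conjugate X \<in> mult_ideal I (Q ^ m)"
    using conjugate_mult_ideal[OF Qm(2) X] Q by (simp add: power involutive)
  then have "conjugate (P \<circ> conjugate X) \<in> mult_ideal I (\<sigma> (Q ^ m))"
    by (intro conjugate_mult_ideal Qm tangent_opsD(2)[OF P m])
  then show "conjugate P \<circ> X \<in> mult_ideal I (\<sigma> Q ^ m)"
    by (simp add: conjugate_comp linop_conjugate linX conjugate_conjugate power)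
qed

lemma tangent_ops_conjugate_image:
  assumes Q: "Q \<in> polys_in I"
  shows "conjugate ` tangent_ops (polys_in I) Q = tangent_ops (polys_in I) (\<sigma> Q)"
proof
  show "conjugate ` tangent_ops (polys_in I) Q \<subseteq> tangent_ops (polys_in I) (\<sigma> Q)"
    using conjugate_tangent[OF Q] by blast
  show "tangent_ops (polys_in I) (\<sigma> Q) \<subseteq> conjugate ` tangent_ops (polys_in I) Q"
  proof
    fix P assume P: "P \<in> tangent_ops (polys_in I) (\<sigma> Q)"
    have "conjugate P \<in> tangent_ops (polys_in I) Q"
      using conjugate_tangent[OF polys_closed[OF Q] P] by (simp add: involutive Q)
    moreover have "P = conjugate (conjugate P)"
      by (simp add: conjugate_conjugate linop_diff_ops tangent_opsD(1)[OF P])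
    ultimately show "P \<in> conjugate ` tangent_ops (polys_in I) Q" by blast
  qed
qed

lemma alg_iso_tensor_conjugate:
  assumes iso: "alg_iso_tensor X x Y y C c" and lin: "\<And>P. P \<in> C \<Longrightarrow> linop (polys_in I) P"
  shows "alg_iso_tensor X x Y y (conjugate ` C) (conjugate c)"
proof -
  obtain \<Psi> where \<Psi>: "\<Psi> ` tfree X Y = C"
    "\<forall>\<phi>\<in>tfree X Y. \<forall>\<psi>\<in>tfree X Y. \<Psi> (\<phi> + \<psi>) = op_add (\<Psi> \<phi>) (\<Psi> \<psi>)"
    "\<forall>c. \<forall>\<phi>\<in>tfree X Y. \<Psi> (tsmult c \<phi>) = op_smult c (\<Psi> \<phi>)"
    "\<forall>\<phi>\<in>tfree X Y. \<Psi> \<phi> = (\<lambda>_. 0) \<longleftrightarrow> \<phi> \<in> trel X Y"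
    "\<forall>a\<in>X. \<forall>a'\<in>X. \<forall>b\<in>Y. \<forall>b'\<in>Y. \<Psi> (tgen (a \<circ> a') (b \<circ> b')) = \<Psi> (tgen a b) \<circ> \<Psi> (tgen a' b')"
    "\<Psi> (tgen x y) = c"
    using iso unfolding alg_iso_tensor_def by blast
  have lin\<Psi>: "linop (polys_in I) (\<Psi> \<phi>)" if "\<phi> \<in> tfree X Y" for \<phi> using \<Psi>(1) that lin by blast
  have tgen: "tgen a b \<in> tfree X Y" if "a \<in> X" "b \<in> Y" for a b using that by (rule tfree_tgen)
  have "conjugate (\<Psi> \<phi>) = (\<lambda>_. 0) \<longleftrightarrow> \<Psi> \<phi> = (\<lambda>_. 0)" if "\<phi> \<in> tfree X Y" for \<phi>
    by (metis conjugate_conjugate conjugate_zero lin\<Psi>[OF that])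
  then show ?thesis
    unfolding alg_iso_tensor_def using \<Psi> lin\<Psi> tgen
    by (intro exI[of _ "conjugate \<circ> \<Psi>"])
       (auto simp: image_comp conjugate_add conjugate_smult conjugate_comp tfree_add tfree_tsmult)
qed

end

section \<open>The braid arrangement\<close>

text \<open>The change of coordinates \<open>x\<^sub>0 \<mapsto> x\<^sub>0\<close>, \<open>x\<^sub>i \<mapsto> x\<^sub>0 - x\<^sub>i\<close> turns the hyperplanes \<open>x\<^sub>0 = x\<^sub>j\<close>
  into the coordinate hyperplanes \<open>x\<^sub>j = 0\<close> and fixes the hyperplanes \<open>x\<^sub>i = x\<^sub>j\<close>, \<open>i, j \<ge> 1\<close>.\<close>
definition braid_coords :: "nat \<Rightarrow> 'k::comm_ring_1 mpoly" where
  "braid_coords i = (if i = 0 then mvar 0 else mvar 0 - mvar i)"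

lemma subst_braid_coords_involutive: "subst braid_coords (subst braid_coords p) = p"
proof (rule ring_hom_eqI[where F="\<lambda>p. subst braid_coords (subst braid_coords p)" and G="\<lambda>p. p" and I=UNIV])
  show "klinear_on (polys_in UNIV) (\<lambda>p. subst braid_coords (subst braid_coords p))"
    "klinear_on (polys_in UNIV) (\<lambda>p. p)"
    unfolding klinear_on_def by (simp_all add: subst_add subst_smult)
  show "subst braid_coords (subst braid_coords (mvar i)) = mvar i" for i
    by (simp add: braid_coords_def subst_mvar subst_diff)
qed (simp_all add: subst_mult polys_in_iff)

lemma mpoly_involution_braid_coords:
  assumes "0 \<in> I"
  shows "mpoly_involution I (subst braid_coords :: 'k::comm_ring_1 mpoly \<Rightarrow> 'k mpoly)"
proof
  show "subst braid_coords p \<in> polys_in I" if "p \<in> polys_in I" for p :: "'k mpoly"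
    using that assms by (intro subst_in_polys) (auto simp: braid_coords_def)
  show "subst braid_coords (mconst c * p) = mconst c * subst braid_coords p" for c and p :: "'k mpoly"
    by (rule subst_smult)
qed (simp_all add: subst_braid_coords_involutive subst_add subst_mult)

lemma subst_braid_poly:
  "subst braid_coords (braid_poly n :: 'k::comm_ring_1 mpoly) =
     mconst ((-1) ^ card {(i, j). 1 \<le> i \<and> i < j \<and> j \<le> n}) * braid_tilde_poly n"
proof -
  let ?E = "(\<lambda>j. (0::nat, j)) ` {1..n}" and ?P = "{(i, j). 1 \<le> i \<and> i < j \<and> j \<le> (n::nat)}"
  let ?f = "\<lambda>x. subst braid_coords (case x of (i, j) \<Rightarrow> mvar i - mvar j) :: 'k mpoly"
  have "finite ?P" by (rule finite_subset[of _ "{0..n} \<times> {0..n}"]) auto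
  moreover have "{(i, j). i < j \<and> j \<le> n} = ?E \<union> ?P" and "?E \<inter> ?P = {}" by auto
  ultimately have "subst braid_coords (braid_poly n :: 'k mpoly) = prod ?f ?E * prod ?f ?P"
    unfolding braid_poly_def subst_prod by (simp add: prod.union_disjoint)
  also have "prod ?f ?E = (\<Prod>j\<in>{1..n}. mvar j)"
    by (subst prod.reindex) (auto simp: inj_on_def subst_diff subst_mvar braid_coords_def intro!: prod.cong)
  also have "prod ?f ?P = (\<Prod>x\<in>?P. mconst (-1) * (case x of (i, j) \<Rightarrow> mvar i - mvar j))"
    by (intro prod.cong refl) (auto simp: subst_diff subst_mvar braid_coords_def mconst_uminus)
  finally show ?thesis
    unfolding braid_tilde_poly_def by (simp add: prod.distrib mconst_power ac_simps)
qed

lemma braid_tilde_poly_in_polys: "braid_tilde_poly n \<in> polys_in {1..n}"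
  unfolding braid_tilde_poly_def
  by (intro polys_in_mult polys_in_prod) (auto intro!: polys_in_diff polys_in_mvar)

lemma braid_poly_in_polys: "braid_poly n \<in> polys_in {0..n}"
  unfolding braid_poly_def by (intro polys_in_prod) (auto intro!: polys_in_diff polys_in_mvar)

lemma conjugate_tangent_ops_braid_tilde:
  "mpoly_involution.conjugate {0..n} (subst braid_coords) ` tangent_ops (polys_in {0..n}) (braid_tilde_poly n)
     = tangent_ops (polys_in {0..n}) (braid_poly n :: 'k::field mpoly)"
proof -
  interpret \<sigma>: mpoly_involution "{0..n}" "subst braid_coords :: 'k mpoly \<Rightarrow> 'k mpoly"
    by (rule mpoly_involution_braid_coords) simp
  have "tangent_ops (polys_in {0..n}) (braid_tilde_poly n) =
      tangent_ops (polys_in {0..n}) (subst braid_coords (braid_poly n :: 'k mpoly))"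
    by (simp add: subst_braid_poly tangent_ops_scale)
  then show ?thesis
    using \<sigma>.tangent_ops_conjugate_image[OF \<sigma>.polys_closed[OF braid_poly_in_polys]]
    by (simp add: subst_braid_coords_involutive)
qed

theorem proposition1p21:
  fixes n :: nat
  assumes "n \<ge> 1"
  shows "alg_iso_tensor
           (weyl_algebra_1 :: 'k::field_char_0 op set) (mult_op (polys_in {0}) 1)
           (D_braid_tilde n) (mult_op (polys_in {1..n}) 1)
           (D_braid n) (mult_op (polys_in {0..n}) 1)"
proof -
  interpret \<sigma>: mpoly_involution "{0..n}" "subst braid_coords :: 'k mpoly \<Rightarrow> 'k mpoly"
    by (rule mpoly_involution_braid_coords) simp
  have "{0} \<union> {1..n} = {0..n}" by auto
  then have "alg_iso_tensor weyl_algebra_1 (id_op {0}) (D_braid_tilde n) (id_op {1..n})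
      (tangent_ops (polys_in {0..n}) (braid_tilde_poly n :: 'k mpoly)) (id_op {0..n})"
    using alg_iso_tensor_tangent_ops[of "{0}" "{1..n}" "braid_tilde_poly n"] braid_tilde_poly_in_polys[of n]
    unfolding weyl_algebra_1_def D_braid_tilde_def by auto
  then have "alg_iso_tensor weyl_algebra_1 (id_op {0}) (D_braid_tilde n) (id_op {1..n})
      (\<sigma>.conjugate ` tangent_ops (polys_in {0..n}) (braid_tilde_poly n)) (\<sigma>.conjugate (id_op {0..n}))"
    by (rule \<sigma>.alg_iso_tensor_conjugate) (auto intro: linop_diff_ops dest: tangent_opsD(1))
  then show ?thesis
    by (simp add: conjugate_tangent_ops_braid_tilde D_braid_def \<sigma>.conjugate_mult_op \<sigma>.one)
qed

end
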